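(* For each $n\ge1$ and $p\in[0,1)$, $R(\Sigma_n,p)=p^{3^n-1}(1-p)^{\frac{3^n-1}{2}}H_n\!\left(1,\tfrac1{1-p}\right)$ with $H_n(1,\frac1{1-p})=H_{2,n}(1,\frac1{1-p})$, where, writing $H_2,N,M$ for $H_{2,n},N_n,M_n$ at $(1,\frac1{1-p})$, $$H_{2,n+1}=\tfrac{p}{1-p}H_2^3+3H_2^3+6H_2^2N,$$ $$N_{n+1}=\tfrac{p}{1-p}H_2^2N+H_2^3+7H_2^2N+H_2^2M+7H_2N^2,$$ $$M_{n+1}=\tfrac{3p}{1-p}H_2N^2+H_2^3+12H_2^2N+3H_2^2M+36H_2N^2+12H_2NM+14N^3,$$ with $H_{2,1}=\frac{3-2p}{1-p}$, $N_1=M_1=1$.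
   Context: Graphs are finite. For a graph $G$, a spanning subgraph $A$ has vertex set $V(G)$ and edge set $E(A)\subseteq E(G)$; $k(A)$ is its number of components, $r(A)=|V(G)|-k(A)$, $n(A)=|E(A)|-r(A)$; the weight of $A$ is $(x-1)^{r(G)-r(A)}(y-1)^{n(A)}$ and the Tutte polynomial $T(G;x,y)$ is the sum of the weights of all spanning subgraphs. The graphs $\Sigma_n$ ($n\ge1$; Schreier graphs of the Hanoi Towers group $H^{(3)}$ with loops removed) each have three outmost vertices top, left, right: $\Sigma_1$ is the triangle $K_3$; $\Sigma_{n+1}$ is the disjoint union of three copies $G_1,G_2,G_3$ of $\Sigma_n$ together with three new edges joining left$(G_1)$ to top$(G_2)$, right$(G_1)$ to top$(G_3)$, and right$(G_2)$ to left$(G_3)$; its outmost vertices are top$(G_1)$, left$(G_2)$, right$(G_3)$. $H_n=T(\Sigma_n;x,y)$. $H_{2,n}$ (resp. $H_{1,n}$, $H_{0,n}$) is the sum of the weights of the spanning subgraphs of $\Sigma_n$ in which the three outmost vertices lie in one component (resp. left and right outmost in one component, top in another; resp. the three in three distinct components). $N_n=H_{1,n}/(x-1)$ and $M_n=H_{0,n}/(x-1)^2$, which are polynomials. $R(G,p)$ is the probability that the random spanning subgraph keeping each edge independently with probability $p$ is connected. *)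

theory Defs
  imports Complex_Main
begin

text \<open>A graph is given by a finite vertex set V and a set E of edges,
each edge being a two-element subset of V.  A spanning subgraph is identified
with its edge set A \<subseteq> E.\<close>

definition edge_rel :: "'a set set \<Rightarrow> ('a \<times> 'a) set" where
  "edge_rel A = {(u, v). {u, v} \<in> A}"

definition comp_rel :: "'a set \<Rightarrow> 'a set set \<Rightarrow> ('a \<times> 'a) set" where
  "comp_rel V A = {(u, v). u \<in> V \<and> v \<in> V \<and> (u, v) \<in> (edge_rel A)\<^sup>*}"

definition same_comp :: "'a set \<Rightarrow> 'a set set \<Rightarrow> 'a \<Rightarrow> 'a \<Rightarrow> bool" where
  "same_comp V A u v \<longleftrightarrow> (u, v) \<in> comp_rel V A"

definition ncomp :: "'a set \<Rightarrow> 'a set set \<Rightarrow> nat" where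
  "ncomp V A = card (V // comp_rel V A)"

definition grank :: "'a set \<Rightarrow> 'a set set \<Rightarrow> nat" where
  "grank V A = card V - ncomp V A"

definition nullity :: "'a set \<Rightarrow> 'a set set \<Rightarrow> nat" where
  "nullity V A = card A - grank V A"

text \<open>With d = 0 and P = True this is the Tutte polynomial; d = 1, 2 give the
polynomial quotients by (x-1), (x-1)^2 used for N_n and M_n.\<close>
definition tutte_part :: "'a set \<Rightarrow> 'a set set \<Rightarrow> ('a set set \<Rightarrow> bool) \<Rightarrow> nat \<Rightarrow> real \<Rightarrow> real \<Rightarrow> real" where
  "tutte_part V E P d x y =
     (\<Sum>A\<in>{A. A \<subseteq> E \<and> P A}.
        (x - 1) ^ (grank V E - grank V A - d) * (y - 1) ^ (nullity V A))"

definition tutte :: "'a set \<Rightarrow> 'a set set \<Rightarrow> real \<Rightarrow> real \<Rightarrow> real" where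
  "tutte V E x y = tutte_part V E (\<lambda>_. True) 0 x y"

text \<open>Reliability: probability that the random spanning subgraph keeping each
edge independently with probability p is connected.\<close>
definition reliability :: "'a set \<Rightarrow> 'a set set \<Rightarrow> real \<Rightarrow> real" where
  "reliability V E p =
     (\<Sum>A\<in>{A. A \<subseteq> E \<and> ncomp V A = 1}. p ^ card A * (1 - p) ^ (card E - card A))"

text \<open>Vertices of Sigma_n are words of length n over {0,1,2}; the copy G_(i+1)
of Sigma_n inside Sigma_(n+1) consists of the words starting with letter i.\<close>

definition sigma_verts :: "nat \<Rightarrow> nat list set" where
  "sigma_verts n = {w. length w = n \<and> set w \<subseteq> {0, 1, 2}}"

definition top_v :: "nat \<Rightarrow> nat list" where "top_v n = replicate n 0"
definition left_v :: "nat \<Rightarrow> nat list" where "left_v n = replicate n 1"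
definition right_v :: "nat \<Rightarrow> nat list" where "right_v n = replicate n 2"

fun sigma_edges :: "nat \<Rightarrow> nat list set set" where
  "sigma_edges 0 = {}"
| "sigma_edges (Suc 0) = {{[0], [1]}, {[1], [2]}, {[0], [2]}}"
| "sigma_edges (Suc (Suc n)) =
     (\<Union>i\<in>{0, 1, 2}. (\<lambda>e. (\<lambda>w. i # w) ` e) ` sigma_edges (Suc n))
     \<union> {{0 # left_v (Suc n), 1 # top_v (Suc n)},
        {0 # right_v (Suc n), 2 # top_v (Suc n)},
        {1 # right_v (Suc n), 2 # left_v (Suc n)}}"

text \<open>H_n, H_{2,n}, N_n = H_{1,n}/(x-1), M_n = H_{0,n}/(x-1)^2 (as functions of real x, y).\<close>

definition Hn :: "nat \<Rightarrow> real \<Rightarrow> real \<Rightarrow> real" where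
  "Hn n x y = tutte (sigma_verts n) (sigma_edges n) x y"

definition H2 :: "nat \<Rightarrow> real \<Rightarrow> real \<Rightarrow> real" where
  "H2 n x y = tutte_part (sigma_verts n) (sigma_edges n)
     (\<lambda>A. same_comp (sigma_verts n) A (top_v n) (left_v n) \<and>
          same_comp (sigma_verts n) A (top_v n) (right_v n)) 0 x y"

definition Nn :: "nat \<Rightarrow> real \<Rightarrow> real \<Rightarrow> real" where
  "Nn n x y = tutte_part (sigma_verts n) (sigma_edges n)
     (\<lambda>A. same_comp (sigma_verts n) A (left_v n) (right_v n) \<and>
          \<not> same_comp (sigma_verts n) A (top_v n) (left_v n)) 1 x y"

definition Mn :: "nat \<Rightarrow> real \<Rightarrow> real \<Rightarrow> real" where
  "Mn n x y = tutte_part (sigma_verts n) (sigma_edges n)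
     (\<lambda>A. \<not> same_comp (sigma_verts n) A (top_v n) (left_v n) \<and>
          \<not> same_comp (sigma_verts n) A (top_v n) (right_v n) \<and>
          \<not> same_comp (sigma_verts n) A (left_v n) (right_v n)) 2 x y"

end

theory Submission
  imports Defs
begin

text \<open>
  At x = 1 the factor (x - 1)^(r(G) - r(A) - d) kills every spanning subgraph A
  except those with exactly d + 1 components; with the conditions on the outmost
  vertices this means that every component of A contains an outmost vertex.  Call
  such subgraphs rooted, and sort them by their corner type (which pairs of outmost
  vertices are connected).  Then H_{2,n}, N_n, M_n at (1, y) are the sums of
  (y - 1)^nullity over rooted subgraphs of the three types up to rotation.

  A spanning subgraph of Sigma_(n+1) is the same as a triple of spanning subgraphs of
  the three copies of Sigma_n together with a subset of the three bridges.  It is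
  rooted iff its parts are rooted and the bridges merge exactly the right classes;
  its type and nullity depend only on the types of the parts and on the bridges.
  This yields a cubic recursion whose coefficients are read off a finite table over
  types and bridge choices, which is evaluated mechanically.  The reliability
  formula follows since a connected subgraph with |A| edges has nullity |A| - |V| + 1.
\<close>

section \<open>Connectivity in finite graphs\<close>

definition simple_on :: "'a set \<Rightarrow> 'a set set \<Rightarrow> bool" where
  "simple_on V A \<longleftrightarrow> (\<forall>e\<in>A. \<exists>a b. e = {a, b} \<and> a \<noteq> b \<and> a \<in> V \<and> b \<in> V)"

lemma simple_on_mono: "simple_on V A \<Longrightarrow> B \<subseteq> A \<Longrightarrow> simple_on V B"
  unfolding simple_on_def by blast

lemma simple_on_Un: "simple_on V A \<Longrightarrow> simple_on V B \<Longrightarrow> simple_on V (A \<union> B)"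
  unfolding simple_on_def by auto

lemma simple_on_verts_mono: "simple_on V A \<Longrightarrow> V \<subseteq> W \<Longrightarrow> simple_on W A"
  unfolding simple_on_def by fastforce

lemma simple_on_Pow: "simple_on V A \<Longrightarrow> A \<subseteq> Pow V"
  unfolding simple_on_def by auto

lemma edge_rel_sym: "sym (edge_rel A)"
  unfolding edge_rel_def sym_def by (auto simp: insert_commute)

lemma edge_rel_subset: "simple_on V A \<Longrightarrow> edge_rel A \<subseteq> V \<times> V"
  unfolding simple_on_def edge_rel_def by (auto simp: doubleton_eq_iff)

lemma comp_rel_subset: "comp_rel V A \<subseteq> V \<times> V"
  unfolding comp_rel_def by auto

lemma comp_rel_equiv: "equiv V (comp_rel V A)"
proof (rule equivI)
  have sym_star: "sym ((edge_rel A)\<^sup>*)" using edge_rel_sym sym_rtrancl by blast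
  show "comp_rel V A \<subseteq> V \<times> V" by (rule comp_rel_subset)
  show "refl_on V (comp_rel V A)" unfolding refl_on_def comp_rel_def by auto
  show "sym (comp_rel V A)"
    using sym_star unfolding sym_def comp_rel_def by blast
  show "trans (comp_rel V A)"
    unfolding trans_def comp_rel_def by (auto intro: rtrancl_trans)
qed

lemma same_comp_refl: "x \<in> V \<Longrightarrow> same_comp V A x x"
  unfolding same_comp_def comp_rel_def by auto

lemma same_comp_sym: "same_comp V A x y \<Longrightarrow> same_comp V A y x"
  using comp_rel_equiv[of V A] unfolding same_comp_def equiv_def sym_def by blast

lemma same_comp_trans: "same_comp V A x y \<Longrightarrow> same_comp V A y z \<Longrightarrow> same_comp V A x z"
  using comp_rel_equiv[of V A] unfolding same_comp_def equiv_def trans_def by blast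

lemma same_comp_in: "same_comp V A x y \<Longrightarrow> x \<in> V \<and> y \<in> V"
  unfolding same_comp_def comp_rel_def by auto

lemma quotient_eq_image: "V // r = (\<lambda>x. r `` {x}) ` V"
  unfolding quotient_def by auto

lemma comp_class_eq_iff:
  "x \<in> V \<Longrightarrow> y \<in> V \<Longrightarrow> comp_rel V A `` {x} = comp_rel V A `` {y} \<longleftrightarrow> same_comp V A x y"
  unfolding same_comp_def using comp_rel_equiv[of V A] by (simp add: equiv_class_eq_iff)

lemma finite_components: "finite V \<Longrightarrow> finite (V // comp_rel V A)"
  by (simp add: quotient_eq_image)

lemma ncomp_le_card: "finite V \<Longrightarrow> ncomp V A \<le> card V"
  unfolding ncomp_def quotient_eq_image by (rule card_image_le)

lemma card_le_ncomp:
  assumes V: "finite V" and S: "S \<subseteq> V"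
    and sep: "\<And>x y. x \<in> S \<Longrightarrow> y \<in> S \<Longrightarrow> same_comp V A x y \<Longrightarrow> x = y"
  shows "card S \<le> ncomp V A"
proof -
  let ?cl = "\<lambda>x. comp_rel V A `` {x}"
  have "inj_on ?cl S"
  proof (rule inj_onI)
    fix x y assume "x \<in> S" "y \<in> S" "?cl x = ?cl y"
    then have "same_comp V A x y" using S comp_class_eq_iff[of x V y A] by blast
    then show "x = y" using sep \<open>x \<in> S\<close> \<open>y \<in> S\<close> by blast
  qed
  then have "card S = card (?cl ` S)" by (simp add: card_image)
  also have "\<dots> \<le> ncomp V A"
    unfolding ncomp_def using S V by (intro card_mono finite_components)
        (auto simp: quotient_eq_image)
  finally show ?thesis .
qed

lemma ncomp_ge1: "finite V \<Longrightarrow> V \<noteq> {} \<Longrightarrow> ncomp V A \<ge> 1"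
  unfolding ncomp_def quotient_eq_image by (simp add: Suc_leI card_gt_0_iff)

lemma connected_same_comp:
  assumes "finite V" "ncomp V A = 1" "x \<in> V" "y \<in> V"
  shows "same_comp V A x y"
proof (rule ccontr)
  assume disc: "\<not> same_comp V A x y"
  then have "x \<noteq> y" using assms(3) same_comp_refl by metis
  have "card {x, y} \<le> ncomp V A"
    using assms disc by (intro card_le_ncomp) (auto dest: same_comp_sym)
  then show False using \<open>x \<noteq> y\<close> assms(2) by (simp add: card_insert_if)
qed

lemma rtrancl_insert_pair:
  shows "(x, y) \<in> (R \<union> {(a, b), (b, a)})\<^sup>* \<longleftrightarrow>
     (x, y) \<in> R\<^sup>* \<or> ((x, a) \<in> R\<^sup>* \<and> (b, y) \<in> R\<^sup>*) \<or> ((x, b) \<in> R\<^sup>* \<and> (a, y) \<in> R\<^sup>*)"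
proof -
  have two_inserts: "R \<union> {(a, b), (b, a)} = insert (b, a) (insert (a, b) R)" by auto
  show ?thesis
    unfolding two_inserts rtrancl_insert by (auto intro: rtrancl_trans)
qed

lemma edge_rel_insert: "edge_rel (insert {a, b} A) = edge_rel A \<union> {(a, b), (b, a)}"
  unfolding edge_rel_def by (auto simp: doubleton_eq_iff)

lemma same_comp_insert:
  assumes "a \<in> V" "b \<in> V"
  shows "same_comp V (insert {a, b} A) x y \<longleftrightarrow> same_comp V A x y
     \<or> (same_comp V A x a \<and> same_comp V A b y) \<or> (same_comp V A x b \<and> same_comp V A a y)"
  unfolding same_comp_def comp_rel_def edge_rel_insert
    rtrancl_insert_pair
  using assms by auto

lemma comp_class_insert:
  assumes a: "a \<in> V" and b: "b \<in> V" and x: "x \<in> V"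
  shows "comp_rel V (insert {a, b} A) `` {x} =
    (if same_comp V A x a \<or> same_comp V A x b
     then comp_rel V A `` {a} \<union> comp_rel V A `` {b} else comp_rel V A `` {x})"
proof -
  have class_eq: "comp_rel V B `` {y} = {z. same_comp V B y z}" for B y
    unfolding same_comp_def by auto
  show ?thesis
  proof (cases "same_comp V A x a \<or> same_comp V A x b")
    case True
    have "same_comp V (insert {a, b} A) x z \<longleftrightarrow> same_comp V A a z \<or> same_comp V A b z" for z
      using True unfolding same_comp_insert[OF a b] by (meson same_comp_sym same_comp_trans)
    then show ?thesis using True unfolding class_eq by auto
  next
    case False
    have "same_comp V (insert {a, b} A) x z \<longleftrightarrow> same_comp V A x z" for z
      using False unfolding same_comp_insert[OF a b] by blast
    then show ?thesis using False unfolding class_eq by auto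
  qed
qed

lemma components_insert_edge:
  assumes a: "a \<in> V" and b: "b \<in> V" and disc: "\<not> same_comp V A a b"
  defines "Ca \<equiv> comp_rel V A `` {a}" and "Cb \<equiv> comp_rel V A `` {b}"
  shows "V // comp_rel V (insert {a, b} A) = insert (Ca \<union> Cb) (V // comp_rel V A - {Ca, Cb})"
proof -
  let ?Q = "comp_rel V A" and ?Q' = "comp_rel V (insert {a, b} A)"
  note cls = comp_class_insert[OF a b]
  have far: "?Q' `` {x} = ?Q `` {x} \<and> ?Q `` {x} \<noteq> Ca \<and> ?Q `` {x} \<noteq> Cb"
    if "x \<in> V" "\<not> (same_comp V A x a \<or> same_comp V A x b)" for x
    using that cls comp_class_eq_iff[OF that(1) a] comp_class_eq_iff[OF that(1) b]
    unfolding Ca_def Cb_def by auto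
  have near: "?Q' `` {x} = Ca \<union> Cb" if "x \<in> V" "same_comp V A x a \<or> same_comp V A x b" for x
    using that cls unfolding Ca_def Cb_def by auto
  show ?thesis
  proof (intro equalityI subsetI)
    fix X assume "X \<in> V // ?Q'"
    then obtain x where x: "x \<in> V" "X = ?Q' `` {x}" by (auto simp: quotient_eq_image)
    show "X \<in> insert (Ca \<union> Cb) (V // ?Q - {Ca, Cb})"
    proof (cases "same_comp V A x a \<or> same_comp V A x b")
      case True then show ?thesis using near x by blast
    next
      case False
      have "?Q `` {x} \<in> V // ?Q" using x(1) by (auto simp: quotient_eq_image)
      then show ?thesis using far[OF x(1) False] x(2) by auto
    qed
  next
    fix X assume X: "X \<in> insert (Ca \<union> Cb) (V // ?Q - {Ca, Cb})"
    show "X \<in> V // ?Q'"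
    proof (cases "X = Ca \<union> Cb")
      case True
      then show ?thesis using near[OF a] same_comp_refl[OF a] a by (auto simp: quotient_eq_image)
    next
      case False
      then obtain x where x: "x \<in> V" "X = ?Q `` {x}" "X \<noteq> Ca" "X \<noteq> Cb"
        using X by (auto simp: quotient_eq_image)
      then have "\<not> (same_comp V A x a \<or> same_comp V A x b)"
        using comp_class_eq_iff[OF x(1) a] comp_class_eq_iff[OF x(1) b]
            unfolding Ca_def Cb_def by auto
      then show ?thesis using far x by (auto simp: quotient_eq_image)
    qed
  qed
qed

lemma ncomp_insert:
  assumes V: "finite V" and a: "a \<in> V" and b: "b \<in> V"
  shows "ncomp V (insert {a, b} A) = (if same_comp V A a b then ncomp V A else ncomp V A - 1)"
proof (cases "same_comp V A a b")
  case True
  have "same_comp V (insert {a, b} A) x y \<longleftrightarrow> same_comp V A x y" for x y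
    using True unfolding same_comp_insert[OF a b] by (meson same_comp_trans same_comp_sym)
  then have "comp_rel V (insert {a, b} A) = comp_rel V A"
    unfolding same_comp_def by auto
  then show ?thesis using True unfolding ncomp_def by simp
next
  case False
  let ?Q = "comp_rel V A"
  let ?Ca = "?Q `` {a}" and ?Cb = "?Q `` {b}"
  have classes: "?Ca \<in> V // ?Q" "?Cb \<in> V // ?Q" "?Ca \<noteq> ?Cb"
    using a b comp_class_eq_iff[OF a b] False by (auto simp: quotient_eq_image)
  have union_new: "?Ca \<union> ?Cb \<notin> V // ?Q - {?Ca, ?Cb}"
  proof
    assume "?Ca \<union> ?Cb \<in> V // ?Q - {?Ca, ?Cb}"
    then obtain x where x: "x \<in> V" "?Ca \<union> ?Cb = ?Q `` {x}" "?Q `` {x} \<noteq> ?Ca"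
      by (auto simp: quotient_eq_image)
    have "a \<in> ?Q `` {x}" using x(2) same_comp_refl[OF a] unfolding same_comp_def by auto
    then show False using comp_class_eq_iff[OF x(1) a] x(3) unfolding same_comp_def by auto
  qed
  have fin: "finite (V // ?Q)" by (rule finite_components[OF V])
  have "card (V // ?Q - {?Ca, ?Cb}) = card (V // ?Q) - 2"
    using classes fin by (simp add: card_Diff_subset)
  moreover have "card (V // ?Q) \<ge> 2"
    using classes fin by (metis card_2_iff card_mono empty_subsetI insert_subset)
  ultimately show ?thesis
    unfolding ncomp_def components_insert_edge[OF a b False]
    using False union_new fin by simp
qed

lemma ncomp_empty: "finite V \<Longrightarrow> ncomp V {} = card V"
proof -
  assume V: "finite V"
  have "comp_rel V {} = Id_on V" unfolding comp_rel_def edge_rel_def by (auto simp: Id_on_def)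
  then have "V // comp_rel V {} = (\<lambda>x. {x}) ` V" unfolding quotient_eq_image by auto
  then show ?thesis unfolding ncomp_def using V by (simp add: card_image)
qed

text \<open>Each edge lowers the number of components by at most one, hence
|V| \<le> |A| + k(A): the nullity card A + k(A) - |V| is a genuine natural number.\<close>
lemma forest_bound:
  assumes "finite A" "finite V" "simple_on V A"
  shows "card V \<le> card A + ncomp V A"
  using assms
proof (induction A rule: finite_induct)
  case empty then show ?case by (simp add: ncomp_empty)
next
  case (insert e A)
  then obtain a b where e: "e = {a, b}" "a \<in> V" "b \<in> V" unfolding simple_on_def by blast
  have "card V \<le> card A + ncomp V A" using insert simple_on_mono by blast
  moreover have "ncomp V A \<le> ncomp V (insert e A) + 1"
    using ncomp_insert[OF insert.prems(1) e(2,3), of A] e(1) by auto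
  ultimately show ?case using insert.hyps by simp
qed

lemma rtrancl_Un_disjoint_stays:
  assumes R1: "R1 \<subseteq> V1 \<times> V1" and R2: "R2 \<subseteq> V2 \<times> V2" and disj: "V1 \<inter> V2 = {}"
    and x: "x \<in> V1" and path: "(x, y) \<in> (R1 \<union> R2)\<^sup>*"
  shows "(x, y) \<in> R1\<^sup>* \<and> y \<in> V1"
proof -
  have stays: "(x, z) \<in> R1\<^sup>* \<Longrightarrow> z \<in> V1" for z
    by (induction rule: rtrancl_induct) (use x R1 in auto)
  have "(x, y) \<in> R1\<^sup>*"
    using path by (rule rtrancl_Un_separatorE) (use stays R2 disj in blast)
  then show ?thesis using stays by blast
qed

lemma comp_rel_Un:
  assumes A1: "simple_on V1 A1" and A2: "simple_on V2 A2" and disj: "V1 \<inter> V2 = {}"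
  shows "comp_rel (V1 \<union> V2) (A1 \<union> A2) = comp_rel V1 A1 \<union> comp_rel V2 A2"
proof -
  have R: "edge_rel (A1 \<union> A2) = edge_rel A1 \<union> edge_rel A2" unfolding edge_rel_def by auto
  note R1 = edge_rel_subset[OF A1] and R2 = edge_rel_subset[OF A2]
  have disj': "V2 \<inter> V1 = {}" using disj by blast
  have "(u, v) \<in> comp_rel V1 A1 \<union> comp_rel V2 A2"
    if "u \<in> V1 \<union> V2" "(u, v) \<in> (edge_rel A1 \<union> edge_rel A2)\<^sup>*" for u v
    using that rtrancl_Un_disjoint_stays[OF R1 R2 disj, of u v]
      rtrancl_Un_disjoint_stays[OF R2 R1 disj', of u v]
    unfolding comp_rel_def by (auto simp: Un_commute)
  moreover have "comp_rel V1 A1 \<union> comp_rel V2 A2 \<subseteq> comp_rel (V1 \<union> V2) (A1 \<union> A2)"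
    unfolding comp_rel_def R using in_rtrancl_UnI by blast
  ultimately show ?thesis unfolding comp_rel_def[of "V1 \<union> V2"] R by auto
qed

lemma same_comp_Un:
  assumes "simple_on V1 A1" "simple_on V2 A2" "V1 \<inter> V2 = {}"
  shows "same_comp (V1 \<union> V2) (A1 \<union> A2) x y \<longleftrightarrow> same_comp V1 A1 x y \<or> same_comp V2 A2 x y"
  unfolding same_comp_def comp_rel_Un[OF assms] by simp

lemma ncomp_Un:
  assumes A: "simple_on V1 A1" "simple_on V2 A2" and disj: "V1 \<inter> V2 = {}"
    and fin: "finite V1" "finite V2"
  shows "ncomp (V1 \<union> V2) (A1 \<union> A2) = ncomp V1 A1 + ncomp V2 A2"
proof -
  let ?Q1 = "comp_rel V1 A1" and ?Q2 = "comp_rel V2 A2"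
  have "(?Q1 \<union> ?Q2) `` {x} = ?Q1 `` {x}" if "x \<in> V1" for x
    using that disj comp_rel_subset[of V2 A2] by auto
  moreover have "(?Q1 \<union> ?Q2) `` {x} = ?Q2 `` {x}" if "x \<in> V2" for x
    using that disj comp_rel_subset[of V1 A1] by auto
  ultimately have split: "(V1 \<union> V2) // (?Q1 \<union> ?Q2) = V1 // ?Q1 \<union> V2 // ?Q2"
    unfolding quotient_eq_image by (auto simp: image_Un)
  have "X \<subseteq> V1" "X \<noteq> {}" if "X \<in> V1 // ?Q1" for X
    using that comp_rel_subset[of V1 A1] same_comp_refl[of _ V1 A1]
    unfolding same_comp_def by (auto simp: quotient_eq_image)
  moreover have "X \<subseteq> V2" if "X \<in> V2 // ?Q2" for X
    using that comp_rel_subset[of V2 A2] by (auto simp: quotient_eq_image)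
  ultimately have "V1 // ?Q1 \<inter> V2 // ?Q2 = {}" using disj by blast
  then show ?thesis unfolding ncomp_def comp_rel_Un[OF A disj] split
    using fin by (intro card_Un_disjoint finite_components)
qed

definition edge_image :: "('a \<Rightarrow> 'b) \<Rightarrow> 'a set set \<Rightarrow> 'b set set" where
  "edge_image f A = (\<lambda>e. f ` e) ` A"

lemma simple_on_edge_image:
  assumes A: "simple_on V A" and inj: "inj_on f V"
  shows "simple_on (f ` V) (edge_image f A)"
  unfolding simple_on_def
proof
  fix e' assume "e' \<in> edge_image f A"
  then obtain e where e: "e \<in> A" "e' = f ` e" unfolding edge_image_def by blast
  then obtain a b where ab: "e = {a, b}" "a \<noteq> b" "a \<in> V" "b \<in> V"
      using A unfolding simple_on_def by blast
  then have "f a \<noteq> f b" using inj by (auto dest: inj_onD)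
  then show "\<exists>a b. e' = {a, b} \<and> a \<noteq> b \<and> a \<in> f ` V \<and> b \<in> f ` V" using e ab by auto
qed

lemma edge_rel_edge_image:
  assumes A: "simple_on V A"
  shows "edge_rel (edge_image f A) = map_prod f f ` edge_rel A"
proof (intro equalityI subsetI)
  fix z assume "z \<in> edge_rel (edge_image f A)"
  then obtain u v e where z: "z = (u, v)" "e \<in> A" "{u, v} = f ` e"
    unfolding edge_rel_def edge_image_def by auto
  then obtain a b where e: "e = {a, b}" using A unfolding simple_on_def by blast
  then have "(u = f a \<and> v = f b) \<or> (u = f b \<and> v = f a)" using z by (auto simp: doubleton_eq_iff)
  moreover have "(a, b) \<in> edge_rel A" "(b, a) \<in> edge_rel A"
    using z e unfolding edge_rel_def by (auto simp: insert_commute)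
  ultimately show "z \<in> map_prod f f ` edge_rel A" using z by force
next
  fix z assume "z \<in> map_prod f f ` edge_rel A"
  then obtain a b where z: "z = (f a, f b)" "{a, b} \<in> A" unfolding edge_rel_def by auto
  then have "f ` {a, b} \<in> edge_image f A" unfolding edge_image_def by blast
  then show "z \<in> edge_rel (edge_image f A)" using z unfolding edge_rel_def by auto
qed

lemma rtrancl_map_inj:
  assumes inj: "inj_on f V" and R: "R \<subseteq> V \<times> V" and x: "x \<in> V" and y: "y \<in> V"
  shows "(f x, f y) \<in> (map_prod f f ` R)\<^sup>* \<longleftrightarrow> (x, y) \<in> R\<^sup>*"
proof
  assume "(x, y) \<in> R\<^sup>*"
  then show "(f x, f y) \<in> (map_prod f f ` R)\<^sup>*"
    by (induction rule: rtrancl_induct) (auto intro: rtrancl_into_rtrancl)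
next
  assume h: "(f x, f y) \<in> (map_prod f f ` R)\<^sup>*"
  have "\<exists>w. z = f w \<and> w \<in> V \<and> (x, w) \<in> R\<^sup>*" if "(f x, z) \<in> (map_prod f f ` R)\<^sup>*" for z
    using that
  proof (induction rule: rtrancl_induct)
    case base then show ?case using x by blast
  next
    case (step z z')
    then obtain w where w: "z = f w" "w \<in> V" "(x, w) \<in> R\<^sup>*" by blast
    obtain u v where uv: "(u, v) \<in> R" "z = f u" "z' = f v" using step.hyps(2) by auto
    have "u \<in> V" "v \<in> V" using uv R by auto
    then have "u = w" using inj w uv inj_onD by metis
    then have "(x, v) \<in> R\<^sup>*" using uv(1) w(3) by (meson rtrancl.rtrancl_into_rtrancl)
    then show ?case using uv(3) \<open>v \<in> V\<close> by blast
  qed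
  from this[OF h] obtain w where "f y = f w" "w \<in> V" "(x, w) \<in> R\<^sup>*" by blast
  then show "(x, y) \<in> R\<^sup>*" using inj y inj_onD by metis
qed

lemma same_comp_edge_image:
  assumes "simple_on V A" "inj_on f V" "x \<in> V" "y \<in> V"
  shows "same_comp (f ` V) (edge_image f A) (f x) (f y) \<longleftrightarrow> same_comp V A x y"
  unfolding same_comp_def comp_rel_def edge_rel_edge_image[OF assms(1)]
  using rtrancl_map_inj[OF assms(2) edge_rel_subset[OF assms(1)] assms(3,4)] assms(3,4) by auto

lemma ncomp_edge_image:
  assumes A: "simple_on V A" and inj: "inj_on f V"
  shows "ncomp (f ` V) (edge_image f A) = ncomp V A"
proof -
  let ?Q = "comp_rel V A" and ?Q' = "comp_rel (f ` V) (edge_image f A)"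
  have class_image: "?Q' `` {f x} = f ` (?Q `` {x})" if x: "x \<in> V" for x
  proof -
    have "z \<in> ?Q' `` {f x} \<longleftrightarrow> (\<exists>y\<in>V. z = f y \<and> same_comp V A x y)" for z
      using same_comp_edge_image[OF A inj x] same_comp_in[of "f ` V" "edge_image f A" "f x" z]
      unfolding same_comp_def by auto
    then show ?thesis using same_comp_in[of V A x] unfolding same_comp_def by auto
  qed
  have "(f ` V) // ?Q' = (\<lambda>X. f ` X) ` (V // ?Q)"
    unfolding quotient_eq_image image_image using class_image by auto
  moreover have "inj_on (\<lambda>X. f ` X) (V // ?Q)"
    by (rule inj_on_subset[OF inj_on_image_Pow[OF inj]])
      (use comp_rel_subset[of V A] in \<open>auto simp: quotient_eq_image\<close>)
  ultimately show ?thesis unfolding ncomp_def by (simp add: card_image)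
qed

lemma card_edge_image: "simple_on V A \<Longrightarrow> inj_on f V \<Longrightarrow> card (edge_image f A) = card A"
  unfolding edge_image_def
  by (rule card_image, rule inj_on_subset[OF inj_on_image_Pow]) (auto simp: simple_on_def)

section \<open>The graphs Sigma_m\<close>

type_synonym edge_set = "nat list set set"

text \<open>Vertex i # w of Sigma_(m+1) is vertex w of the copy number i; corner m i j is
the outmost vertex j of copy i, and the three bridges join corner i j to corner j i.\<close>
definition corner :: "nat \<Rightarrow> nat \<Rightarrow> nat \<Rightarrow> nat list" where
  "corner m i j = i # replicate m j"

definition bridges :: "nat \<Rightarrow> edge_set" where
  "bridges m =
     {{corner m 0 1, corner m 1 0}, {corner m 0 2, corner m 2 0}, {corner m 1 2, corner m 2 1}}"

lemma verts_0: "sigma_verts 0 = {[]}"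
  unfolding sigma_verts_def by auto

lemma verts_Suc:
  "sigma_verts (Suc m) = Cons 0 ` sigma_verts m \<union> Cons 1 ` sigma_verts m \<union> Cons 2 ` sigma_verts m"
proof (intro equalityI subsetI)
  fix w assume "w \<in> sigma_verts (Suc m)"
  then obtain i w' where w: "w = i # w'" "length w' = m" "set w' \<subseteq> {0,1,2}" "i \<in> {0,1,2}"
    unfolding sigma_verts_def by (cases w) auto
  then show "w \<in> Cons 0 ` sigma_verts m \<union> Cons 1 ` sigma_verts m \<union> Cons 2 ` sigma_verts m"
    unfolding sigma_verts_def by auto
qed (auto simp: sigma_verts_def)

lemma edges_Suc:
  "sigma_edges (Suc m) = edge_image (Cons 0) (sigma_edges m) \<union> edge_image (Cons 1) (sigma_edges m)
     \<union> edge_image (Cons 2) (sigma_edges m) \<union> bridges m"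
proof (cases m)
  case 0 then show ?thesis by (auto simp: edge_image_def bridges_def corner_def)
next
  case (Suc k) then show ?thesis
    by (simp add: edge_image_def bridges_def corner_def left_v_def right_v_def top_v_def Un_assoc)
qed

lemma finite_verts: "finite (sigma_verts m)"
  by (induction m) (auto simp: verts_0 verts_Suc)

lemma card_verts: "card (sigma_verts m) = 3 ^ m"
proof (induction m)
  case 0 then show ?case by (simp add: verts_0)
next
  case (Suc m)
  have f: "finite (Cons i ` sigma_verts m)" for i :: nat using finite_verts by blast
  have c: "card (Cons i ` sigma_verts m) = 3 ^ m" for i :: nat using Suc by (simp add: card_image)
  show ?case unfolding verts_Suc
    by (subst card_Un_disjoint, use f in auto)+ (use c in simp)
qed

lemma replicate_in_verts: "j < 3 \<Longrightarrow> replicate m j \<in> sigma_verts m"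
  unfolding sigma_verts_def by auto

lemma verts_ne: "sigma_verts m \<noteq> {}"
proof -
  have "replicate m 0 \<in> sigma_verts m" by (rule replicate_in_verts) simp
  then show ?thesis by blast
qed

lemma corner_in_verts: "i < 3 \<Longrightarrow> j < 3 \<Longrightarrow> corner m i j \<in> sigma_verts (Suc m)"
  unfolding sigma_verts_def corner_def by auto

lemma bridge_simple: "i<3 \<Longrightarrow> j<3 \<Longrightarrow> i'<3 \<Longrightarrow> j'<3 \<Longrightarrow> i \<noteq> i' \<Longrightarrow>
   \<exists>a b. {corner m i j, corner m i' j'} = {a,b} \<and> a \<noteq> b \<and> a \<in> sigma_verts (Suc m)
       \<and> b \<in> sigma_verts (Suc m)"
  by (intro exI conjI refl corner_in_verts) (auto simp: corner_def sigma_verts_def)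

lemma simple_bridges: "simple_on (sigma_verts (Suc m)) (bridges m)"
  unfolding simple_on_def bridges_def using bridge_simple[of 0 1 1 0 m]
      bridge_simple[of 0 2 2 0 m] bridge_simple[of 1 2 2 1 m] by auto

lemma simple_edges: "simple_on (sigma_verts m) (sigma_edges m)"
proof (induction m)
  case 0 then show ?case by (simp add: simple_on_def)
next
  case (Suc m)
  have inj: "inj_on (Cons i) X" for i :: nat and X by simp
  have "simple_on (sigma_verts (Suc m)) (edge_image (Cons i) (sigma_edges m))" if "i \<in> {0,1,2}"
      for i :: nat
    by (rule simple_on_verts_mono[OF simple_on_edge_image[OF Suc inj]])
        (use that in \<open>auto simp: verts_Suc\<close>)
  then show ?case unfolding edges_Suc using simple_bridges by (intro simple_on_Un) auto
qed

lemma simple_sigma_sub: "A \<subseteq> sigma_edges m \<Longrightarrow> simple_on (sigma_verts m) A"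
  using simple_on_mono simple_edges by blast

lemma finite_edges: "finite (sigma_edges m)"
  using simple_on_Pow[OF simple_edges] finite_verts by (meson finite_Pow_iff finite_subset)

lemma forest_bound_sigma: "A \<subseteq> sigma_edges m
  \<Longrightarrow> card (sigma_verts m) \<le> card A + ncomp (sigma_verts m) A"
  by (rule forest_bound)
    (auto intro: finite_subset[OF _ finite_edges] finite_verts simple_sigma_sub)

text \<open>The corner type of a spanning subgraph records which pairs of outmost
vertices (top-left, top-right, left-right) are connected.\<close>
type_synonym ctype = "bool \<times> bool \<times> bool"

definition corner_type :: "nat \<Rightarrow> edge_set \<Rightarrow> ctype" where
  "corner_type m A = (same_comp (sigma_verts m) A (replicate m 0) (replicate m 1),
             same_comp (sigma_verts m) A (replicate m 0) (replicate m 2),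
             same_comp (sigma_verts m) A (replicate m 1) (replicate m 2))"

text \<open>The five types that are consistent with transitivity.\<close>
definition ctypes :: "ctype set" where
  "ctypes = {(True, True, True), (False, False, True), (True, False, False), (False, True, False),
     (False, False, False)}"

text \<open>The number of components containing an outmost vertex.\<close>
definition nclasses :: "ctype \<Rightarrow> nat" where
 "nclasses t = (case t of (a,b,c) \<Rightarrow> if a \<and> b then 1 else if a \<or> b \<or> c then 2 else 3)"

lemma nclasses_pos: "nclasses t \<ge> 1"
  unfolding nclasses_def by (auto split: prod.splits)

lemma corner_type_in_ctypes: "corner_type m A \<in> ctypes"
proof -
  let ?s = "same_comp (sigma_verts m) A"
  let ?r = "replicate m"
  have "?s (?r 0) (?r 1) \<Longrightarrow> ?s (?r 0) (?r 2) \<Longrightarrow> ?s (?r 1) (?r 2)"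
    "?s (?r 0) (?r 1) \<Longrightarrow> ?s (?r 1) (?r 2) \<Longrightarrow> ?s (?r 0) (?r 2)"
    "?s (?r 0) (?r 2) \<Longrightarrow> ?s (?r 1) (?r 2) \<Longrightarrow> ?s (?r 0) (?r 1)"
    by (meson same_comp_sym same_comp_trans)+
  then show ?thesis unfolding corner_type_def ctypes_def by auto
qed

text \<open>Distinct classes of outmost vertices are distinct components.\<close>
lemma nclasses_le_ncomp: "nclasses (corner_type m A) \<le> ncomp (sigma_verts m) A"
proof -
  let ?s = "same_comp (sigma_verts m) A"
  let ?r = "\<lambda>j::nat. replicate m j"
  have r: "?r 0 \<in> sigma_verts m" "?r 1 \<in> sigma_verts m" "?r 2 \<in> sigma_verts m"
      by (auto intro: replicate_in_verts)
  have ne: "sigma_verts m \<noteq> {}" using r by blast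
  have "?s (?r 0) (?r 1) \<Longrightarrow> ?s (?r 0) (?r 2) \<Longrightarrow> ?s (?r 1) (?r 2)"
    by (meson same_comp_sym same_comp_trans)
  note ge1 = ncomp_ge1[OF finite_verts ne, of A]
  have ge2: "2 \<le> ncomp (sigma_verts m) A"
    if "x \<in> sigma_verts m" "y \<in> sigma_verts m" "\<not> ?s x y" for x y
  proof -
    have "card {x, y} \<le> ncomp (sigma_verts m) A"
      using that by (intro card_le_ncomp[OF finite_verts]) (auto dest: same_comp_sym)
    then show ?thesis using that(3) same_comp_refl[OF that(1)] by (cases "x = y") auto
  qed
  have ge3: "3 \<le> ncomp (sigma_verts m) A"
    if "\<not> ?s (?r 0) (?r 1)" "\<not> ?s (?r 0) (?r 2)" "\<not> ?s (?r 1) (?r 2)"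
  proof -
    have "?r 0 \<noteq> ?r 1" "?r 0 \<noteq> ?r 2" "?r 1 \<noteq> ?r 2" using that r same_comp_refl by metis+
    moreover have "card {?r 0, ?r 1, ?r 2} \<le> ncomp (sigma_verts m) A"
      using that r by (intro card_le_ncomp[OF finite_verts]) (auto dest: same_comp_sym)
    ultimately show ?thesis by simp
  qed
  show ?thesis unfolding corner_type_def nclasses_def
      using ge1 ge2[OF r(1) r(2)] ge2[OF r(1) r(3)] ge3
    by auto
qed

definition corner_rel :: "ctype \<Rightarrow> nat \<Rightarrow> nat \<Rightarrow> bool" where
 "corner_rel \<tau> j j' = (j = j' \<or> (case \<tau> of (a,b,c) \<Rightarrow>
     (j + j' = 1 \<and> a) \<or> (j + j' = 2 \<and> j \<noteq> j' \<and> b) \<or> (j + j' = 3 \<and> c)))"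

lemma less_3_cases: "(j::nat) < 3 \<longleftrightarrow> j = 0 \<or> j = 1 \<or> j = 2" by auto

lemma corner_rel_same_comp:
  assumes r: "\<And>j. j < 3 \<Longrightarrow> r j \<in> V" and j: "j < 3" and j': "j' < 3"
  shows "corner_rel (same_comp V A (r 0) (r 1), same_comp V A (r 0) (r 2),
      same_comp V A (r 1) (r 2)) j j' = same_comp V A (r j) (r j')"
proof -
  have "r 0 \<in> V" "r 1 \<in> V" "r 2 \<in> V" using r by auto
  then show ?thesis using j j' unfolding less_3_cases corner_rel_def
    by (auto simp: same_comp_refl dest: same_comp_sym)
qed

lemma corner_rel_corner_type:
  "j < 3 \<Longrightarrow> j' < 3 \<Longrightarrow>
    corner_rel (corner_type m A) j j' = same_comp (sigma_verts m) A (replicate m j) (replicate m j')"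
  unfolding corner_type_def by (rule corner_rel_same_comp[where r = "\<lambda>j. replicate m j"])
      (auto intro: replicate_in_verts)

section \<open>Gluing three subgraphs\<close>

text \<open>Every spanning subgraph of Sigma_(m+1) is uniquely obtained by gluing a
spanning subgraph of each copy of Sigma_m and choosing a subset s of the bridges.\<close>
definition opt_insert :: "bool \<Rightarrow> 'a \<Rightarrow> 'a set \<Rightarrow> 'a set" where
  "opt_insert s b X = (if s then insert b X else X)"

definition copies :: "edge_set \<Rightarrow> edge_set \<Rightarrow> edge_set \<Rightarrow> edge_set" where
  "copies A0 A1 A2 = edge_image (Cons 0) A0 \<union> edge_image (Cons 1) A1 \<union> edge_image (Cons 2) A2"

definition glue :: "nat \<Rightarrow> edge_set \<Rightarrow> edge_set \<Rightarrow> edge_set \<Rightarrow> ctype \<Rightarrow> edge_set" where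
  "glue m A0 A1 A2 s = (case s of (s1,s2,s3) \<Rightarrow>
     opt_insert s3 {corner m 1 2, corner m 2 1}
         (opt_insert s2 {corner m 0 2, corner m 2 0}
         (opt_insert s1 {corner m 0 1, corner m 1 0} (copies A0 A1 A2))))"

text \<open>Connectivity between the nine corner vertices (copy, corner) of Sigma_(m+1)
is described by a relation on index pairs; models states that the relation is exact.\<close>
type_synonym corner_model = "nat \<times> nat \<Rightarrow> nat \<times> nat \<Rightarrow> bool"

definition models :: "nat \<Rightarrow> edge_set \<Rightarrow> corner_model \<Rightarrow> bool" where
  "models m X mdl \<longleftrightarrow> (\<forall>i<3. \<forall>j<3. \<forall>i'<3. \<forall>j'<3.
      same_comp (sigma_verts (Suc m)) X (corner m i j) (corner m i' j') = mdl (i, j) (i', j'))"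

text \<open>Before any bridge is added, only corners of the same copy can be connected.\<close>
definition copies_model :: "ctype \<Rightarrow> ctype \<Rightarrow> ctype \<Rightarrow> corner_model" where
  "copies_model t0 t1 t2 x y = (fst x = fst y \<and>
     corner_rel (if fst x = 0 then t0 else if fst x = 1 then t1 else t2) (snd x) (snd y))"

definition add_edge_model :: "corner_model \<Rightarrow> bool \<Rightarrow> nat \<times> nat \<Rightarrow> nat \<times> nat \<Rightarrow> corner_model" where
  "add_edge_model mdl s a b x y = (mdl x y \<or> (s \<and> ((mdl x a \<and> mdl b y) \<or> (mdl x b \<and> mdl a y))))"

definition glued_model :: "ctype \<Rightarrow> ctype \<Rightarrow> ctype \<Rightarrow> ctype \<Rightarrow> corner_model" where
  "glued_model t0 t1 t2 s = (case s of (s1, s2, s3) \<Rightarrow>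
    add_edge_model (add_edge_model (add_edge_model (copies_model t0 t1 t2)
      s1 (0, 1) (1, 0)) s2 (0, 2) (2, 0)) s3 (1, 2) (2, 1))"

text \<open>The number of bridges of s that join two different components.\<close>
definition merges :: "ctype \<Rightarrow> ctype \<Rightarrow> ctype \<Rightarrow> ctype \<Rightarrow> nat" where
  "merges t0 t1 t2 s = (case s of (s1, s2, s3) \<Rightarrow>
      (if s1 \<and> \<not> copies_model t0 t1 t2 (0, 1) (1, 0) then 1 else 0)
    + (if s2 \<and> \<not> add_edge_model (copies_model t0 t1 t2) s1 (0, 1) (1, 0) (0, 2) (2, 0)
       then 1 else 0)
    + (if s3 \<and> \<not> add_edge_model (add_edge_model (copies_model t0 t1 t2) s1 (0, 1) (1, 0))
                   s2 (0, 2) (2, 0) (1, 2) (2, 1) then 1 else 0))"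

definition nbridges :: "ctype \<Rightarrow> nat" where
  "nbridges s = (case s of (a, b, c) \<Rightarrow>
     (if a then 1 else 0) + (if b then 1 else 0) + (if c then 1 else 0))"

definition glued_type :: "ctype \<Rightarrow> ctype \<Rightarrow> ctype \<Rightarrow> ctype \<Rightarrow> ctype" where
  "glued_type t0 t1 t2 s = (glued_model t0 t1 t2 s (0, 0) (1, 1),
     glued_model t0 t1 t2 s (0, 0) (2, 2), glued_model t0 t1 t2 s (1, 1) (2, 2))"

lemma same_comp_copy:
  assumes w: "simple_on (sigma_verts m) A"
    and a: "a < 3" and a': "a' < 3" and j: "j < 3" and j': "j' < 3"
  shows "same_comp (Cons i ` sigma_verts m) (edge_image (Cons i) A) (corner m a j) (corner m a' j')
     \<longleftrightarrow> a = i \<and> a' = i \<and> same_comp (sigma_verts m) A (replicate m j) (replicate m j')"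
proof (cases "a = i \<and> a' = i")
  case True
  then show ?thesis unfolding corner_def
    using same_comp_edge_image[OF w _ replicate_in_verts[OF j] replicate_in_verts[OF j'],
        of "Cons i"] by simp
next
  case False
  then have "\<not> (corner m a j \<in> Cons i ` sigma_verts m \<and> corner m a' j' \<in> Cons i ` sigma_verts m)"
    unfolding corner_def by auto
  then show ?thesis
    using False same_comp_in[of "Cons i ` sigma_verts m" "edge_image (Cons i) A"] by blast
qed

lemma simple_copy:
  "A \<subseteq> sigma_edges m \<Longrightarrow> simple_on (Cons i ` sigma_verts m) (edge_image (Cons i) A)"
  by (rule simple_on_edge_image[OF simple_sigma_sub]) simp_all

lemma copies_split:
  assumes "A0 \<subseteq> sigma_edges m" "A1 \<subseteq> sigma_edges m"
  shows "simple_on (Cons 0 ` sigma_verts m \<union> Cons 1 ` sigma_verts m)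
           (edge_image (Cons 0) A0 \<union> edge_image (Cons 1) A1)"
    and "Cons 0 ` sigma_verts m \<inter> Cons 1 ` sigma_verts m = {}"
    and "(Cons 0 ` sigma_verts m \<union> Cons 1 ` sigma_verts m) \<inter> Cons 2 ` sigma_verts m = {}"
  using assms by (auto intro!: simple_on_Un simple_on_verts_mono[OF simple_copy])

lemma same_comp_copies:
  assumes A: "A0 \<subseteq> sigma_edges m" "A1 \<subseteq> sigma_edges m" "A2 \<subseteq> sigma_edges m"
  shows "same_comp (sigma_verts (Suc m)) (copies A0 A1 A2) x y \<longleftrightarrow>
     same_comp (Cons 0 ` sigma_verts m) (edge_image (Cons 0) A0) x y \<or>
     same_comp (Cons 1 ` sigma_verts m) (edge_image (Cons 1) A1) x y \<or>
     same_comp (Cons 2 ` sigma_verts m) (edge_image (Cons 2) A2) x y"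
  unfolding copies_def verts_Suc
    same_comp_Un[OF copies_split(1)[OF A(1,2)] simple_copy[OF A(3)] copies_split(3)[OF A(1,2)]]
    same_comp_Un[OF simple_copy[OF A(1)] simple_copy[OF A(2)] copies_split(2)[OF A(1,2)]]
  by blast

lemma ncomp_copies:
  assumes A: "A0 \<subseteq> sigma_edges m" "A1 \<subseteq> sigma_edges m" "A2 \<subseteq> sigma_edges m"
  shows "ncomp (sigma_verts (Suc m)) (copies A0 A1 A2) =
     ncomp (sigma_verts m) A0 + ncomp (sigma_verts m) A1 + ncomp (sigma_verts m) A2"
proof -
  have fin: "finite (Cons i ` sigma_verts m)" for i :: nat using finite_verts by blast
  have k: "ncomp (Cons i ` sigma_verts m) (edge_image (Cons i) A) = ncomp (sigma_verts m) A"
    if "A \<subseteq> sigma_edges m" for i A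
    by (rule ncomp_edge_image[OF simple_sigma_sub[OF that]]) simp
  show ?thesis
    unfolding copies_def verts_Suc
    using ncomp_Un[OF copies_split(1)[OF A(1,2)] simple_copy[OF A(3)] copies_split(3)[OF A(1,2)]]
      ncomp_Un[OF simple_copy[OF A(1)] simple_copy[OF A(2)] copies_split(2)[OF A(1,2)] fin fin]
      k[OF A(1)] k[OF A(2)] k[OF A(3)] fin by simp
qed

lemma models_copies:
  assumes A: "A0 \<subseteq> sigma_edges m" "A1 \<subseteq> sigma_edges m" "A2 \<subseteq> sigma_edges m"
  shows "models m (copies A0 A1 A2)
    (copies_model (corner_type m A0) (corner_type m A1) (corner_type m A2))"
  unfolding models_def
proof (intro allI impI)
  fix i j i' j' :: nat
  assume h: "i < 3" "j < 3" "i' < 3" "j' < 3"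
  note s = same_comp_copy[OF simple_sigma_sub[OF A(1)] h(1,3,2,4)]
    same_comp_copy[OF simple_sigma_sub[OF A(2)] h(1,3,2,4)]
    same_comp_copy[OF simple_sigma_sub[OF A(3)] h(1,3,2,4)]
  show "same_comp (sigma_verts (Suc m)) (copies A0 A1 A2) (corner m i j) (corner m i' j')
      = copies_model (corner_type m A0) (corner_type m A1) (corner_type m A2) (i, j) (i', j')"
    unfolding same_comp_copies[OF A] s copies_model_def
    using h corner_rel_corner_type[OF h(2,4)] unfolding less_3_cases by auto
qed

lemma models_add_edge:
  assumes I: "models m X mdl" and a: "a1 < 3" "a2 < 3" and b: "b1 < 3" "b2 < 3"
  shows "models m (opt_insert s {corner m a1 a2, corner m b1 b2} X)
    (add_edge_model mdl s (a1,a2) (b1,b2))"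
    and "ncomp (sigma_verts (Suc m)) (opt_insert s {corner m a1 a2, corner m b1 b2} X) =
         ncomp (sigma_verts (Suc m)) X - (if s \<and> \<not> mdl (a1,a2) (b1,b2) then 1 else 0)"
proof -
  have pa: "corner m a1 a2 \<in> sigma_verts (Suc m)" and pb: "corner m b1 b2 \<in> sigma_verts (Suc m)"
    using corner_in_verts a b by auto
  show "models m (opt_insert s {corner m a1 a2, corner m b1 b2} X)
      (add_edge_model mdl s (a1,a2) (b1,b2))"
    unfolding models_def opt_insert_def add_edge_model_def
  proof (intro allI impI)
    fix i j i' j' :: nat
    assume h: "i < 3" "j < 3" "i' < 3" "j' < 3"
    show "same_comp (sigma_verts (Suc m))
        (if s then insert {corner m a1 a2, corner m b1 b2} X else X) (corner m i j)
        (corner m i' j') =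
          (mdl (i, j) (i', j') \<or> s \<and> (mdl (i, j) (a1, a2) \<and> mdl (b1, b2) (i', j')
             \<or> mdl (i, j) (b1, b2) \<and> mdl (a1, a2) (i', j')))"
      using same_comp_insert[OF pa pb] I h a b unfolding models_def by auto
  qed
  show "ncomp (sigma_verts (Suc m)) (opt_insert s {corner m a1 a2, corner m b1 b2} X) =
         ncomp (sigma_verts (Suc m)) X - (if s \<and> \<not> mdl (a1,a2) (b1,b2) then 1 else 0)"
    unfolding opt_insert_def using ncomp_insert[OF finite_verts pa pb] I a b
    unfolding models_def by auto
qed

lemma glue_models:
  assumes A: "A0 \<subseteq> sigma_edges m" "A1 \<subseteq> sigma_edges m" "A2 \<subseteq> sigma_edges m"
  shows "models m (glue m A0 A1 A2 s)
      (glued_model (corner_type m A0) (corner_type m A1) (corner_type m A2) s)"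
    and "ncomp (sigma_verts (Suc m)) (glue m A0 A1 A2 s) =
         ncomp (sigma_verts m) A0 + ncomp (sigma_verts m) A1 + ncomp (sigma_verts m) A2
          - merges (corner_type m A0) (corner_type m A1) (corner_type m A2) s"
proof -
  obtain s1 s2 s3 where s: "s = (s1,s2,s3)" by (cases s) auto
  note I1 = models_add_edge[OF models_copies[OF A], of 0 1 1 0 s1, simplified]
  note I2 = models_add_edge[OF I1(1), of 0 2 2 0 s2, simplified]
  note I3 = models_add_edge[OF I2(1), of 1 2 2 1 s3, simplified]
  show "models m (glue m A0 A1 A2 s)
      (glued_model (corner_type m A0) (corner_type m A1) (corner_type m A2) s)"
    using I3(1) unfolding glue_def glued_model_def s by simp
  show "ncomp (sigma_verts (Suc m)) (glue m A0 A1 A2 s) =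
         ncomp (sigma_verts m) A0 + ncomp (sigma_verts m) A1 + ncomp (sigma_verts m) A2
          - merges (corner_type m A0) (corner_type m A1) (corner_type m A2) s"
    unfolding glue_def s merges_def using I1(2) I2(2) I3(2) ncomp_copies[OF A]
    by (simp add: diff_diff_left)
qed

lemma replicate_Suc_corner: "replicate (Suc m) j = corner m j j" unfolding corner_def by simp

text \<open>The outmost vertices of Sigma_(m+1) are the corners (i, i) of the copies.\<close>
lemma corner_type_glue:
  assumes A: "A0 \<subseteq> sigma_edges m" "A1 \<subseteq> sigma_edges m" "A2 \<subseteq> sigma_edges m"
  shows "corner_type (Suc m) (glue m A0 A1 A2 s)
    = glued_type (corner_type m A0) (corner_type m A1) (corner_type m A2) s"
proof -
  note I = glue_models(1)[OF A, of s]
  have D: "same_comp (sigma_verts (Suc m)) (glue m A0 A1 A2 s) (corner m i j) (corner m i' j')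
      = glued_model (corner_type m A0) (corner_type m A1) (corner_type m A2) s (i,j) (i',j')"
    if "i < 3" "j < 3" "i' < 3" "j' < 3" for i j i' j'
    using I that unfolding models_def by blast
  show ?thesis unfolding corner_type_def[of "Suc m"] glued_type_def replicate_Suc_corner
    using D[of 0 0 1 1] D[of 0 0 2 2] D[of 1 1 2 2] by simp
qed

lemma sigma_edge_nonempty: "A \<subseteq> sigma_edges m \<Longrightarrow> e \<in> A \<Longrightarrow> e \<noteq> {}"
  using simple_edges[of m] unfolding simple_on_def by blast

lemma edge_image_Cons_mem: "e \<noteq> {} \<Longrightarrow> Cons i ` e \<in> edge_image (Cons j) A \<longleftrightarrow> i = j \<and> e \<in> A"
proof
  assume ne: "e \<noteq> {}" and h: "Cons i ` e \<in> edge_image (Cons j) A"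
  then obtain e' where e': "e' \<in> A" "Cons i ` e = Cons j ` e'" unfolding edge_image_def by auto
  obtain x where "x \<in> e" using ne by blast
  then have "i # x \<in> Cons j ` e'" using e' by blast
  then have ij: "i = j" by auto
  then have "e = e'" using e'(2) by (simp add: inj_image_eq_iff)
  then show "i = j \<and> e \<in> A" using ij e' by simp
qed (auto simp: edge_image_def)

lemma edge_image_Cons_same_head: "{i # x, j # y} \<in> edge_image (Cons k) A \<Longrightarrow> i = j"
  unfolding edge_image_def by (auto simp: doubleton_eq_iff)
      (metis imageE insertI1 insert_commute list.inject)+

lemma cross_edge_notin_copies: "i \<noteq> j \<Longrightarrow> {i # x, j # y} \<notin> copies A0 A1 A2"
  unfolding copies_def by (auto dest: edge_image_Cons_same_head)

lemma opt_insert_mem: "y \<in> opt_insert s b X \<longleftrightarrow> (s \<and> y = b) \<or> y \<in> X"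
  unfolding opt_insert_def by auto

lemma card_opt_insert: "finite X \<Longrightarrow> b \<notin> X \<Longrightarrow> card (opt_insert s b X) = card X + (if s then 1 else 0)"
  unfolding opt_insert_def by auto

lemma finite_opt_insert: "finite X \<Longrightarrow> finite (opt_insert s b X)"
  unfolding opt_insert_def by auto

lemma edge_image_Cons_disjoint:
  "{} \<notin> A \<Longrightarrow> i \<noteq> j \<Longrightarrow> edge_image (Cons i) A \<inter> edge_image (Cons j) B = {}"
proof -
  assume ne: "{} \<notin> A" and ij: "i \<noteq> j"
  have "x \<notin> edge_image (Cons j) B" if xA: "x \<in> edge_image (Cons i) A" for x
  proof -
    obtain e where e: "e \<in> A" "x = Cons i ` e" using xA unfolding edge_image_def by blast
    then have "e \<noteq> {}" using ne by auto
    then show ?thesis using edge_image_Cons_mem[of e i j B] e ij by simp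
  qed
  then show ?thesis by blast
qed

lemma finite_edge_image: "finite A \<Longrightarrow> finite (edge_image f A)" unfolding edge_image_def by simp

lemma card_copies:
  assumes A: "A0 \<subseteq> sigma_edges m" "A1 \<subseteq> sigma_edges m" "A2 \<subseteq> sigma_edges m"
  shows "card (copies A0 A1 A2) = card A0 + card A1 + card A2" and "finite (copies A0 A1 A2)"
proof -
  have f: "finite A0" "finite A1" "finite A2" using A finite_edges finite_subset by blast+
  have ne: "{} \<notin> A0" "{} \<notin> A1" "{} \<notin> A2" using sigma_edge_nonempty A by blast+
  have inj: "inj_on (Cons i) X" for i :: nat and X by simp
  have c: "card (edge_image (Cons i) A) = card A" if "A \<subseteq> sigma_edges m" for i A
    using card_edge_image[OF simple_sigma_sub[OF that] inj] .
  have d1: "edge_image (Cons 0) A0 \<inter> edge_image (Cons 1) A1 = {}"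
    using edge_image_Cons_disjoint[OF ne(1), of 0 1 A1] by simp
  have d2: "(edge_image (Cons 0) A0 \<union> edge_image (Cons 1) A1) \<inter> edge_image (Cons 2) A2 = {}"
    using edge_image_Cons_disjoint[OF ne(1), of 0 2 A2]
      edge_image_Cons_disjoint[OF ne(2), of 1 2 A2] by auto
  show "finite (copies A0 A1 A2)" unfolding copies_def using f by (simp add: finite_edge_image)
  show "card (copies A0 A1 A2) = card A0 + card A1 + card A2"
    unfolding copies_def
    by (subst card_Un_disjoint, use f d2 in \<open>auto simp: finite_edge_image\<close>)
       (subst card_Un_disjoint, use f d1 A c in \<open>auto simp: finite_edge_image\<close>)
qed

lemma bridges_distinct:
  "{corner m 0 1, corner m 1 0} \<noteq> {corner m 0 2, corner m 2 0}"
  "{corner m 0 1, corner m 1 0} \<noteq> {corner m 1 2, corner m 2 1}"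
  "{corner m 0 2, corner m 2 0} \<noteq> {corner m 1 2, corner m 2 1}"
  unfolding corner_def by (auto simp: doubleton_eq_iff)

lemma bridge_notin_copies: "{corner m a b, corner m c d} \<notin> copies A0 A1 A2" if "a \<noteq> c" for a b c d
  unfolding corner_def using cross_edge_notin_copies that by blast

lemma card_glue:
  assumes A: "A0 \<subseteq> sigma_edges m" "A1 \<subseteq> sigma_edges m" "A2 \<subseteq> sigma_edges m"
  shows "card (glue m A0 A1 A2 s) = card A0 + card A1 + card A2 + nbridges s"
proof -
  obtain s1 s2 s3 where s: "s = (s1,s2,s3)" by (cases s) auto
  note U = card_copies[OF A]
  have n1: "{corner m 0 1, corner m 1 0} \<notin> copies A0 A1 A2" by (rule bridge_notin_copies) simp
  have n2: "{corner m 0 2, corner m 2 0} \<notin> opt_insert s1 {corner m 0 1, corner m 1 0}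
      (copies A0 A1 A2)"
    using bridge_notin_copies[of 0 2 m 2 0] bridges_distinct bridges_distinct[symmetric]
    unfolding opt_insert_mem by auto
  have n3: "{corner m 1 2, corner m 2 1} \<notin> opt_insert s2 {corner m 0 2, corner m 2 0}
      (opt_insert s1 {corner m 0 1, corner m 1 0} (copies A0 A1 A2))"
    using bridge_notin_copies[of 1 2 m 2 1] bridges_distinct bridges_distinct[symmetric]
    unfolding opt_insert_mem by auto
  show ?thesis unfolding glue_def s nbridges_def
    using U n1 n2 n3 by (simp add: card_opt_insert finite_opt_insert)
qed

lemma glue_sub:
  assumes A: "A0 \<subseteq> sigma_edges m" "A1 \<subseteq> sigma_edges m" "A2 \<subseteq> sigma_edges m"
  shows "glue m A0 A1 A2 s \<subseteq> sigma_edges (Suc m)"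
proof -
  obtain s1 s2 s3 where s: "s = (s1,s2,s3)" by (cases s) auto
  have "edge_image (Cons i) A \<subseteq> edge_image (Cons i) (sigma_edges m)" if "A \<subseteq> sigma_edges m" for i A
    using that unfolding edge_image_def by blast
  then have "copies A0 A1 A2 \<subseteq> sigma_edges (Suc m)" unfolding copies_def edges_Suc using A by blast
  moreover have "bridges m \<subseteq> sigma_edges (Suc m)" unfolding edges_Suc by blast
  ultimately show ?thesis unfolding glue_def s opt_insert_def bridges_def by auto
qed

lemma glue_mem: "x \<in> glue m A0 A1 A2 (s1, s2, s3) \<longleftrightarrow>
   (s1 \<and> x = {corner m 0 1, corner m 1 0}) \<or> (s2 \<and> x = {corner m 0 2, corner m 2 0})
   \<or> (s3 \<and> x = {corner m 1 2, corner m 2 1}) \<or> x \<in> copies A0 A1 A2"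
  unfolding glue_def by (auto simp: opt_insert_mem)

text \<open>The inverse of gluing: the part of X lying in copy i.\<close>
definition restrict_copy :: "nat \<Rightarrow> nat \<Rightarrow> edge_set \<Rightarrow> edge_set" where
  "restrict_copy m i X = {e \<in> sigma_edges m. Cons i ` e \<in> X}"

lemma copy_edge_not_bridge: "e \<noteq> {} \<Longrightarrow> a \<noteq> c \<Longrightarrow> Cons i ` e \<noteq> {corner m a b, corner m c d}"
  unfolding corner_def by (metis image_iff insertI1 insert_commute list.inject)

lemma restrict_copy_glue:
  assumes A: "A0 \<subseteq> sigma_edges m" "A1 \<subseteq> sigma_edges m" "A2 \<subseteq> sigma_edges m"
  shows "restrict_copy m 0 (glue m A0 A1 A2 s) = A0"
    and "restrict_copy m 1 (glue m A0 A1 A2 s) = A1"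
    and "restrict_copy m 2 (glue m A0 A1 A2 s) = A2"
proof -
  obtain s1 s2 s3 where s: "s = (s1,s2,s3)" by (cases s) auto
  have key: "Cons i ` e \<in> glue m A0 A1 A2 s
      \<longleftrightarrow> Cons i ` e \<in> copies A0 A1 A2" if e: "e \<in> sigma_edges m" for e i
  proof -
    have ne: "e \<noteq> {}" by (rule sigma_edge_nonempty[OF subset_refl e])
    have "Cons i ` e \<noteq> {corner m 0 1, corner m 1 0}" "Cons i ` e \<noteq> {corner m 0 2, corner m 2 0}"
      "Cons i ` e \<noteq> {corner m 1 2, corner m 2 1}"
      by (rule copy_edge_not_bridge[OF ne], simp)+
    then show ?thesis unfolding s glue_mem by auto
  qed
  have k2: "Cons i ` e \<in> copies A0 A1 A2
      \<longleftrightarrow> (i = 0 \<and> e \<in> A0) \<or> (i = 1 \<and> e \<in> A1) \<or> (i = 2 \<and> e \<in> A2)" if e: "e \<in> sigma_edges m" for e i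
  proof -
    have ne: "e \<noteq> {}" by (rule sigma_edge_nonempty[OF subset_refl e])
    show ?thesis unfolding copies_def using edge_image_Cons_mem[OF ne] by auto
  qed
  show "restrict_copy m 0 (glue m A0 A1 A2 s) = A0"
    and "restrict_copy m 1 (glue m A0 A1 A2 s) = A1"
    and "restrict_copy m 2 (glue m A0 A1 A2 s) = A2"
    unfolding restrict_copy_def using key k2 A by auto
qed

lemma bridges_of_glue:
  assumes A: "A0 \<subseteq> sigma_edges m" "A1 \<subseteq> sigma_edges m" "A2 \<subseteq> sigma_edges m"
  shows "({corner m 0 1, corner m 1 0} \<in> glue m A0 A1 A2 s,
           {corner m 0 2, corner m 2 0} \<in> glue m A0 A1 A2 s,
           {corner m 1 2, corner m 2 1} \<in> glue m A0 A1 A2 s) = s"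
proof -
  obtain s1 s2 s3 where s: "s = (s1,s2,s3)" by (cases s) auto
  show ?thesis unfolding s glue_mem using bridges_distinct bridges_distinct[symmetric]
      bridge_notin_copies[of 0 1 m] bridge_notin_copies[of 0 2 m] bridge_notin_copies[of 1 2 m]
    by auto
qed

lemma glue_restrict_copy:
  assumes X: "X \<subseteq> sigma_edges (Suc m)"
  shows "glue m (restrict_copy m 0 X) (restrict_copy m 1 X) (restrict_copy m 2 X)
     ({corner m 0 1, corner m 1 0} \<in> X, {corner m 0 2, corner m 2 0} \<in> X,
         {corner m 1 2, corner m 2 1} \<in> X) = X"
proof (intro equalityI subsetI)
  fix x assume "x \<in> glue m (restrict_copy m 0 X) (restrict_copy m 1 X) (restrict_copy m 2 X)
     ({corner m 0 1, corner m 1 0} \<in> X, {corner m 0 2, corner m 2 0} \<in> X,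
         {corner m 1 2, corner m 2 1} \<in> X)"
  then show "x \<in> X" unfolding glue_mem copies_def restrict_copy_def edge_image_def by auto
next
  fix x assume x: "x \<in> X"
  then have "x \<in> sigma_edges (Suc m)" using X by blast
  then consider (c) i e where "i \<in> {0, 1, 2}" "e \<in> sigma_edges m" "x = Cons i ` e"
    | (b) "x \<in> bridges m"
    unfolding edges_Suc edge_image_def by blast
  then show "x \<in> glue m (restrict_copy m 0 X) (restrict_copy m 1 X) (restrict_copy m 2 X)
     ({corner m 0 1, corner m 1 0} \<in> X, {corner m 0 2, corner m 2 0} \<in> X,
         {corner m 1 2, corner m 2 1} \<in> X)"
  proof cases
    case c
    then have "e \<in> restrict_copy m i X" unfolding restrict_copy_def using x by auto
    then have "x \<in> copies (restrict_copy m 0 X) (restrict_copy m 1 X) (restrict_copy m 2 X)"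
      using c unfolding copies_def edge_image_def by auto
    then show ?thesis unfolding glue_mem by auto
  next
    case b then show ?thesis unfolding glue_mem bridges_def using x by auto
  qed
qed

lemma sum_glue:
  fixes g :: "edge_set \<Rightarrow> real"
  shows "(\<Sum>X\<in>Pow (sigma_edges (Suc m)). g X) =
    (\<Sum>A0\<in>Pow (sigma_edges m). \<Sum>A1\<in>Pow (sigma_edges m). \<Sum>A2\<in>Pow (sigma_edges m). \<Sum>s\<in>UNIV.
        g (glue m A0 A1 A2 s))"
proof -
  let ?D = "Pow (sigma_edges m) \<times> Pow (sigma_edges m) \<times> Pow (sigma_edges m) \<times> (UNIV :: ctype set)"
  let ?i = "\<lambda>(A0,A1,A2,s). glue m A0 A1 A2 s"
  let ?j = "\<lambda>X. (restrict_copy m 0 X, restrict_copy m 1 X, restrict_copy m 2 X,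
       ({corner m 0 1, corner m 1 0} \<in> X, {corner m 0 2, corner m 2 0} \<in> X,
           {corner m 1 2, corner m 2 1} \<in> X))"
  have "(\<Sum>X\<in>Pow (sigma_edges (Suc m)). g X) = (\<Sum>z\<in>?D. g (?i z))"
  proof (rule sum.reindex_bij_witness[where i = ?i and j = ?j])
    fix X assume "X \<in> Pow (sigma_edges (Suc m))"
    then show "?i (?j X) = X" using glue_restrict_copy by auto
    show "?j X \<in> ?D" unfolding restrict_copy_def by auto
  next
    fix z assume z: "z \<in> ?D"
    then obtain A0 A1 A2 s where zz: "z = (A0, A1, A2, s)"
      "A0 \<subseteq> sigma_edges m" "A1 \<subseteq> sigma_edges m" "A2 \<subseteq> sigma_edges m"
      by auto
    show "?j (?i z) = z"
      using restrict_copy_glue[OF zz(2-4)] bridges_of_glue[OF zz(2-4)] zz(1) by simp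
    show "?i z \<in> Pow (sigma_edges (Suc m))" using glue_sub[OF zz(2-4)] zz(1) by simp
  next
    fix X assume "X \<in> Pow (sigma_edges (Suc m))"
    then show "g (?i (?j X)) = g X" using glue_restrict_copy by auto
  qed
  also have "\<dots> = (\<Sum>A0\<in>Pow (sigma_edges m). \<Sum>A1\<in>Pow (sigma_edges m).
      \<Sum>A2\<in>Pow (sigma_edges m). \<Sum>s\<in>UNIV. g (glue m A0 A1 A2 s))"
    by (simp add: sum.cartesian_product')
  finally show ?thesis .
qed

section \<open>The finite gluing table\<close>

text \<open>Each bridge that merges two components also merges two corner classes, so the
merges plus the classes of the glued type are at most the classes of the parts; and
there are at most as many merges as bridges.  Both are checked by evaluating all
combinations of consistent types and bridge choices.\<close>
lemma table_bounds:
  assumes "t0 \<in> ctypes" "t1 \<in> ctypes" "t2 \<in> ctypes"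
  shows "merges t0 t1 t2 s + nclasses (glued_type t0 t1 t2 s)
      \<le> nclasses t0 + nclasses t1 + nclasses t2"
    and "merges t0 t1 t2 s \<le> nbridges s"
proof -
  have "\<forall>t0\<in>ctypes. \<forall>t1\<in>ctypes. \<forall>t2\<in>ctypes. \<forall>s1 s2 s3.
      merges t0 t1 t2 (s1, s2, s3) + nclasses (glued_type t0 t1 t2 (s1, s2, s3))
        \<le> nclasses t0 + nclasses t1 + nclasses t2
      \<and> merges t0 t1 t2 (s1, s2, s3) \<le> nbridges (s1, s2, s3)"
    unfolding ctypes_def by code_simp
  then show "merges t0 t1 t2 s + nclasses (glued_type t0 t1 t2 s)
      \<le> nclasses t0 + nclasses t1 + nclasses t2"
    and "merges t0 t1 t2 s \<le> nbridges s"
    using assms by (cases s; force)+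
qed

text \<open>A choice s contributes the weight q ^ (number of bridges closing a cycle) to
type tX precisely if the glued subgraph is again rooted with type tX.\<close>
definition glue_weight :: "real \<Rightarrow> ctype \<Rightarrow> ctype \<Rightarrow> ctype \<Rightarrow> ctype \<Rightarrow> ctype \<Rightarrow> real" where
  "glue_weight q tX t0 t1 t2 s =
     (if nclasses t0 + nclasses t1 + nclasses t2 - merges t0 t1 t2 s = nclasses tX
         \<and> glued_type t0 t1 t2 s = tX
      then q ^ (nbridges s - merges t0 t1 t2 s) else 0)"

definition sum_choices :: "(ctype \<Rightarrow> real) \<Rightarrow> real" where
  "sum_choices f = f (False, False, False) + f (False, False, True) + f (False, True, False)
     + f (False, True, True) + f (True, False, False) + f (True, False, True)
     + f (True, True, False) + f (True, True, True)"

lemma sum_UNIV_ctype: "(\<Sum>s\<in>(UNIV::ctype set). f s) = sum_choices f"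
proof -
  have u: "(UNIV::ctype set) = {(False, False, False), (False, False, True), (False, True, False),
      (False, True, True), (True, False, False), (True, False, True), (True, True, False),
      (True, True, True)}"
    by auto
  show ?thesis unfolding u by (simp add: sum_choices_def)
qed

text \<open>By the rotation symmetry, the three one-pair types have the same sum; so a
function on types is determined by its values H, N, M at the three orbit types.\<close>
definition type_value :: "real \<Rightarrow> real \<Rightarrow> real \<Rightarrow> ctype \<Rightarrow> real" where
  "type_value H N M t =
     (if t = (True, True, True) then H else if t = (False, False, False) then M else N)"

lemmas table_defs = type_value_def merges_def glued_type_def glued_model_def add_edge_model_def
  copies_model_def corner_rel_def nclasses_def nbridges_def

lemma table_H2:
  "(\<Sum>t0\<in>ctypes. \<Sum>t1\<in>ctypes. \<Sum>t2\<in>ctypes. type_value H N M t0 * type_value H N M t1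
      * type_value H N M t2 * sum_choices (glue_weight q (True, True, True) t0 t1 t2))
   = q * H^3 + 3 * H^3 + 6 * H^2 * N"
  unfolding ctypes_def sum_choices_def glue_weight_def
  by (simp add: table_defs) (simp add: algebra_simps power2_eq_square power3_eq_cube)

lemma table_N:
  "(\<Sum>t0\<in>ctypes. \<Sum>t1\<in>ctypes. \<Sum>t2\<in>ctypes. type_value H N M t0 * type_value H N M t1
      * type_value H N M t2 * sum_choices (glue_weight q (False, False, True) t0 t1 t2))
   = q * H^2 * N + H^3 + 7 * H^2 * N + H^2 * M + 7 * H * N^2"
  unfolding ctypes_def sum_choices_def glue_weight_def
  by (simp add: table_defs) (simp add: algebra_simps power2_eq_square power3_eq_cube)

lemma table_M:
  "(\<Sum>t0\<in>ctypes. \<Sum>t1\<in>ctypes. \<Sum>t2\<in>ctypes. type_value H N M t0 * type_value H N M t1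
      * type_value H N M t2 * sum_choices (glue_weight q (False, False, False) t0 t1 t2))
   = 3 * q * H * N^2 + H^3 + 12 * H^2 * N + 3 * H^2 * M + 36 * H * N^2
     + 12 * H * N * M + 14 * N^3"
  unfolding ctypes_def sum_choices_def glue_weight_def
  by (simp add: table_defs) (simp add: algebra_simps power2_eq_square power3_eq_cube)

section \<open>Rooted subgraphs and their generating sums\<close>

definition nul :: "nat \<Rightarrow> edge_set \<Rightarrow> nat" where
  "nul m A = card A + ncomp (sigma_verts m) A - card (sigma_verts m)"

text \<open>A spanning subgraph is rooted if every component contains an outmost vertex,
i.e. the number of components equals the number of corner classes.  At x = 1
exactly these subgraphs survive in the Tutte-type sums.\<close>
definition rooted :: "nat \<Rightarrow> edge_set \<Rightarrow> bool" where
  "rooted m A \<longleftrightarrow> ncomp (sigma_verts m) A = nclasses (corner_type m A)"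

definition rooted_sum :: "real \<Rightarrow> nat \<Rightarrow> ctype \<Rightarrow> real" where
  "rooted_sum q m t = (\<Sum>A\<in>{A. A \<subseteq> sigma_edges m \<and> rooted m A \<and> corner_type m A = t}. q ^ nul m A)"

text \<open>The glued subgraph has k(A0) + k(A1) + k(A2) - merges components, which is at
least the number of its corner classes, with equality only if every k(A_i) equals
the number of corner classes of A_i: rooted glued subgraphs come from rooted parts.\<close>
lemma rooted_of_rooted_glue:
  assumes A: "A0 \<subseteq> sigma_edges m" "A1 \<subseteq> sigma_edges m" "A2 \<subseteq> sigma_edges m"
    and G: "rooted (Suc m) (glue m A0 A1 A2 s)"
  shows "rooted m A0 \<and> rooted m A1 \<and> rooted m A2"
proof -
  let ?t0 = "corner_type m A0" and ?t1 = "corner_type m A1" and ?t2 = "corner_type m A2"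
  have "nclasses ?t0 \<le> ncomp (sigma_verts m) A0" "nclasses ?t1 \<le> ncomp (sigma_verts m) A1"
    "nclasses ?t2 \<le> ncomp (sigma_verts m) A2" by (rule nclasses_le_ncomp)+
  moreover have "merges ?t0 ?t1 ?t2 s + nclasses (glued_type ?t0 ?t1 ?t2 s)
      \<le> nclasses ?t0 + nclasses ?t1 + nclasses ?t2"
    using table_bounds corner_type_in_ctypes by blast
  moreover have "ncomp (sigma_verts m) A0 + ncomp (sigma_verts m) A1 + ncomp (sigma_verts m) A2
      - merges ?t0 ?t1 ?t2 s = nclasses (glued_type ?t0 ?t1 ?t2 s)"
    using G unfolding rooted_def glue_models(2)[OF A] corner_type_glue[OF A] .
  ultimately show ?thesis unfolding rooted_def by linarith
qed

lemma nul_glue: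
  assumes A: "A0 \<subseteq> sigma_edges m" "A1 \<subseteq> sigma_edges m" "A2 \<subseteq> sigma_edges m"
    and R: "rooted m A0" "rooted m A1" "rooted m A2"
  shows "nul (Suc m) (glue m A0 A1 A2 s) = nul m A0 + nul m A1 + nul m A2
     + (nbridges s - merges (corner_type m A0) (corner_type m A1) (corner_type m A2) s)"
proof -
  let ?t0 = "corner_type m A0" and ?t1 = "corner_type m A1" and ?t2 = "corner_type m A2"
  let ?V = "sigma_verts m"
  have "merges ?t0 ?t1 ?t2 s + 1 \<le> nclasses ?t0 + nclasses ?t1 + nclasses ?t2"
    "merges ?t0 ?t1 ?t2 s \<le> nbridges s"
    using table_bounds[of ?t0 ?t1 ?t2 s] nclasses_pos[of "glued_type ?t0 ?t1 ?t2 s"]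
      corner_type_in_ctypes by fastforce+
  moreover have "card ?V \<le> card A0 + ncomp ?V A0" "card ?V \<le> card A1 + ncomp ?V A1"
    "card ?V \<le> card A2 + ncomp ?V A2" using forest_bound_sigma A by blast+
  moreover have "card (sigma_verts (Suc m)) = 3 * card ?V" unfolding card_verts by simp
  ultimately show ?thesis
    using R unfolding nul_def card_glue[OF A] glue_models(2)[OF A] rooted_def by linarith
qed

lemma glue_contribution:
  assumes A: "A0 \<subseteq> sigma_edges m" "A1 \<subseteq> sigma_edges m" "A2 \<subseteq> sigma_edges m"
  shows "(if rooted (Suc m) (glue m A0 A1 A2 s) \<and> corner_type (Suc m) (glue m A0 A1 A2 s) = tX
            then q ^ nul (Suc m) (glue m A0 A1 A2 s) else 0)
      = (if rooted m A0 then q ^ nul m A0 else 0) * (if rooted m A1 then q ^ nul m A1 else 0)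
        * (if rooted m A2 then q ^ nul m A2 else 0)
        * glue_weight q tX (corner_type m A0) (corner_type m A1) (corner_type m A2) s"
proof (cases "rooted m A0 \<and> rooted m A1 \<and> rooted m A2")
  case True
  then have R: "rooted m A0" "rooted m A1" "rooted m A2" by auto
  have "rooted (Suc m) (glue m A0 A1 A2 s) \<longleftrightarrow>
      nclasses (corner_type m A0) + nclasses (corner_type m A1) + nclasses (corner_type m A2)
      - merges (corner_type m A0) (corner_type m A1) (corner_type m A2) s
      = nclasses (corner_type (Suc m) (glue m A0 A1 A2 s))"
    using R unfolding rooted_def glue_models(2)[OF A] by simp
  then show ?thesis using R
    unfolding glue_weight_def nul_glue[OF A R] corner_type_glue[OF A] by (simp add: power_add)
next
  case False
  then have "\<not> rooted (Suc m) (glue m A0 A1 A2 s)" using rooted_of_rooted_glue[OF A] by blast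
  then show ?thesis using False by auto
qed

lemma sum_by_type:
  fixes h :: "ctype \<Rightarrow> real"
  shows "(\<Sum>A\<in>Pow (sigma_edges m). (if rooted m A then q ^ nul m A else 0) * h (corner_type m A))
    = (\<Sum>t\<in>ctypes. rooted_sum q m t * h t)"
proof -
  let ?S = "{A \<in> Pow (sigma_edges m). rooted m A}"
  have fP: "finite (Pow (sigma_edges m))" using finite_edges by simp
  have fS: "finite ?S" using fP by simp
  have fT: "finite ctypes" unfolding ctypes_def by simp
  have "(\<Sum>A\<in>Pow (sigma_edges m). (if rooted m A then q ^ nul m A else 0) * h (corner_type m A))
      = (\<Sum>A\<in>Pow (sigma_edges m). if rooted m A then q ^ nul m A * h (corner_type m A) else 0)"
    by (rule sum.cong) auto
  also have "\<dots> = (\<Sum>A\<in>?S. q ^ nul m A * h (corner_type m A))"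
    using sum.inter_filter[OF fP, of "\<lambda>A. q ^ nul m A * h (corner_type m A)" "rooted m"] by simp
  also have "\<dots> = (\<Sum>t\<in>ctypes. \<Sum>A\<in>{x. x \<in> ?S \<and> corner_type m x = t}.
      q ^ nul m A * h (corner_type m A))"
    by (rule sum.group[symmetric, OF fS fT]) (use corner_type_in_ctypes in blast)
  also have "\<dots> = (\<Sum>t\<in>ctypes. rooted_sum q m t * h t)"
  proof (rule sum.cong[OF refl])
    fix t assume "t \<in> ctypes"
    have "(\<Sum>A\<in>{x. x \<in> ?S \<and> corner_type m x = t}. q ^ nul m A * h (corner_type m A))
        = (\<Sum>A\<in>{x. x \<in> ?S \<and> corner_type m x = t}. q ^ nul m A * h t)"
      by (rule sum.cong) auto
    also have "\<dots> = rooted_sum q m t * h t" unfolding rooted_sum_def sum_distrib_right[symmetric]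
      by (rule arg_cong[where f = "\<lambda>x. x * h t"], rule sum.cong) auto
    finally show "(\<Sum>A\<in>{x. x \<in> ?S \<and> corner_type m x = t}. q ^ nul m A * h (corner_type m A))
        = rooted_sum q m t * h t" .
  qed
  finally show ?thesis .
qed

lemma rooted_sum_recursion:
  "rooted_sum q (Suc m) tX = (\<Sum>t0\<in>ctypes. rooted_sum q m t0 * (\<Sum>t1\<in>ctypes. rooted_sum q m t1
     * (\<Sum>t2\<in>ctypes. rooted_sum q m t2 * (\<Sum>s\<in>UNIV. glue_weight q tX t0 t1 t2 s))))"
proof -
  let ?I = "\<lambda>A. if rooted m A then q ^ nul m A else (0::real)"
  let ?P = "Pow (sigma_edges m)"
  have fP: "finite (Pow (sigma_edges (Suc m)))" using finite_edges by simp
  have "rooted_sum q (Suc m) tX = (\<Sum>X\<in>Pow (sigma_edges (Suc m)).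
      if rooted (Suc m) X \<and> corner_type (Suc m) X = tX then q ^ nul (Suc m) X else 0)"
    unfolding rooted_sum_def
    using sum.inter_filter[OF fP, of "\<lambda>X. q ^ nul (Suc m) X"
        "\<lambda>X. rooted (Suc m) X \<and> corner_type (Suc m) X = tX"]
    by (simp add: Pow_def conj_assoc)
  also have "\<dots> = (\<Sum>A0\<in>?P. \<Sum>A1\<in>?P. \<Sum>A2\<in>?P. \<Sum>s\<in>UNIV.
       ?I A0 * ?I A1 * ?I A2 * glue_weight q tX (corner_type m A0) (corner_type m A1)
           (corner_type m A2) s)"
    unfolding sum_glue by (intro sum.cong refl) (simp add: glue_contribution)
  also have "\<dots> = (\<Sum>A0\<in>?P. ?I A0 * (\<Sum>A1\<in>?P. ?I A1 * (\<Sum>A2\<in>?P. ?I A2 *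
       (\<Sum>s\<in>UNIV. glue_weight q tX (corner_type m A0) (corner_type m A1) (corner_type m A2) s))))"
    by (simp add: sum_distrib_left mult.assoc)
  also have "\<dots> = (\<Sum>A0\<in>?P. ?I A0 * (\<Sum>A1\<in>?P. ?I A1 * (\<Sum>t2\<in>ctypes. rooted_sum q m t2 *
       (\<Sum>s\<in>UNIV. glue_weight q tX (corner_type m A0) (corner_type m A1) t2 s))))"
    by (subst sum_by_type) simp
  also have "\<dots> = (\<Sum>A0\<in>?P. ?I A0 * (\<Sum>t1\<in>ctypes. rooted_sum q m t1 * (\<Sum>t2\<in>ctypes. rooted_sum q m t2 *
       (\<Sum>s\<in>UNIV. glue_weight q tX (corner_type m A0) t1 t2 s))))"
    by (subst sum_by_type) simp
  also have "\<dots> = (\<Sum>t0\<in>ctypes. rooted_sum q m t0 * (\<Sum>t1\<in>ctypes. rooted_sum q m t1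
      * (\<Sum>t2\<in>ctypes. rooted_sum q m t2 * (\<Sum>s\<in>UNIV. glue_weight q tX t0 t1 t2 s))))"
    by (subst sum_by_type) simp
  finally show ?thesis .
qed

text \<open>Cyclically relabelling the letters 0, 1, 2 is an automorphism of Sigma_m
that rotates the three outmost vertices.\<close>
definition succ3 :: "nat \<Rightarrow> nat" where "succ3 x = (x + 1) mod 3"

definition rot_word :: "nat list \<Rightarrow> nat list" where "rot_word w = map succ3 w"

lemma rot_word_Cons: "rot_word (i # w) = succ3 i # rot_word w" unfolding rot_word_def by simp

lemma rot_word_replicate: "rot_word (replicate m j) = replicate m (succ3 j)"
  unfolding rot_word_def by simp

lemma rot_word_corner: "rot_word (corner m i j) = corner m (succ3 i) (succ3 j)"
  unfolding rot_word_def corner_def by simp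

lemma rot_word_verts_sub: "rot_word ` sigma_verts m \<subseteq> sigma_verts m"
  unfolding rot_word_def sigma_verts_def succ3_def by auto

lemma succ3_simps: "succ3 0 = 1" "succ3 1 = 2" "succ3 2 = 0" "succ3 (Suc 0) = 2"
  by (simp_all add: succ3_def)

lemma rot_word_3: assumes w: "w \<in> sigma_verts m" shows "rot_word (rot_word (rot_word w)) = w"
  unfolding rot_word_def map_map
  by (rule map_idI) (use w in \<open>auto simp: sigma_verts_def succ3_def\<close>)

lemma rot_word_verts: "rot_word ` sigma_verts m = sigma_verts m"
proof
  show "rot_word ` sigma_verts m \<subseteq> sigma_verts m" by (rule rot_word_verts_sub)
  show "sigma_verts m \<subseteq> rot_word ` sigma_verts m"
  proof
    fix w assume w: "w \<in> sigma_verts m"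
    have "rot_word (rot_word w) \<in> sigma_verts m" using rot_word_verts_sub w by blast
    then show "w \<in> rot_word ` sigma_verts m" using rot_word_3[OF w] by (metis image_eqI)
  qed
qed

lemma inj_rot_word: "inj_on rot_word (sigma_verts m)"
proof (rule inj_onI)
  fix x y assume "x \<in> sigma_verts m" "y \<in> sigma_verts m" "rot_word x = rot_word y"
  then show "x = y" using rot_word_3 by metis
qed

lemma edge_image_comp: "edge_image f (edge_image g A) = edge_image (f \<circ> g) A"
  unfolding edge_image_def by (simp add: image_image image_comp)

lemma edge_image_Un: "edge_image f (A \<union> B) = edge_image f A \<union> edge_image f B"
  unfolding edge_image_def by auto

lemma rot_word_edges: "edge_image rot_word (sigma_edges m) = sigma_edges m"
proof (induction m)
  case 0 then show ?case by (simp add: edge_image_def)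
next
  case (Suc m)
  have c: "rot_word \<circ> Cons i = Cons (succ3 i) \<circ> rot_word" for i
    by (rule ext) (simp add: rot_word_Cons)
  have ci: "edge_image rot_word (edge_image (Cons i) (sigma_edges m))
      = edge_image (Cons (succ3 i)) (sigma_edges m)" for i
    by (simp only: edge_image_comp c) (simp only: edge_image_comp[symmetric] Suc)
  have b: "edge_image rot_word (bridges m) = bridges m"
    unfolding bridges_def edge_image_def by (simp add: rot_word_corner succ3_simps insert_commute)
  show ?case unfolding edges_Suc edge_image_Un ci b succ3_simps by auto
qed

lemma corner_type_rotate:
  assumes A: "A \<subseteq> sigma_edges m" and c: "corner_type m A = (a,b,c)"
  shows "corner_type m (edge_image rot_word A) = (b,c,a)"
proof -
  note w = simple_sigma_sub[OF A]
  have sc: "same_comp (sigma_verts m) (edge_image rot_word A) (rot_word x) (rot_word y)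
      = same_comp (sigma_verts m) A x y"
    if "x \<in> sigma_verts m" "y \<in> sigma_verts m" for x y
    using same_comp_edge_image[OF w inj_rot_word that] unfolding rot_word_verts .
  have ri: "replicate m j \<in> sigma_verts m" if "j < 3" for j using replicate_in_verts that by blast
  have e1: "same_comp (sigma_verts m) (edge_image rot_word A) (replicate m 0) (replicate m 1)
      = same_comp (sigma_verts m) A (replicate m 2) (replicate m 0)"
    using sc[OF ri[of 2] ri[of 0]] by (simp add: rot_word_replicate succ3_simps)
  have e2: "same_comp (sigma_verts m) (edge_image rot_word A) (replicate m 0) (replicate m 2)
      = same_comp (sigma_verts m) A (replicate m 2) (replicate m 1)"
    using sc[OF ri[of 2] ri[of 1]] by (simp add: rot_word_replicate succ3_simps)
  have e3: "same_comp (sigma_verts m) (edge_image rot_word A) (replicate m 1) (replicate m 2)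
      = same_comp (sigma_verts m) A (replicate m 0) (replicate m 1)"
    using sc[OF ri[of 0] ri[of 1]] by (simp add: rot_word_replicate succ3_simps)
  show ?thesis using c unfolding corner_type_def e1 e2 e3
    by (auto dest: same_comp_sym)
qed

lemma nclasses_rotate: "(a,b,c) \<in> ctypes \<Longrightarrow> nclasses (b,c,a) = nclasses (a,b,c)"
  unfolding ctypes_def nclasses_def by auto

lemma rot_word_invariants:
  assumes A: "A \<subseteq> sigma_edges m"
  shows "edge_image rot_word A \<subseteq> sigma_edges m"
    and "ncomp (sigma_verts m) (edge_image rot_word A) = ncomp (sigma_verts m) A"
    and "nul m (edge_image rot_word A) = nul m A"
    and "rooted m (edge_image rot_word A) = rooted m A"
proof -
  show sub: "edge_image rot_word A \<subseteq> sigma_edges m"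
    using A rot_word_edges unfolding edge_image_def by blast
  show k: "ncomp (sigma_verts m) (edge_image rot_word A) = ncomp (sigma_verts m) A"
    using ncomp_edge_image[OF simple_sigma_sub[OF A] inj_rot_word] unfolding rot_word_verts .
  show "nul m (edge_image rot_word A) = nul m A"
    unfolding nul_def k card_edge_image[OF simple_sigma_sub[OF A] inj_rot_word] ..
  obtain x y z where c: "corner_type m A = (x, y, z)" by (cases "corner_type m A") auto
  then have "(x, y, z) \<in> ctypes" using corner_type_in_ctypes by metis
  then show "rooted m (edge_image rot_word A) = rooted m A"
    unfolding rooted_def k using corner_type_rotate[OF A c] c nclasses_rotate by simp
qed

lemma rooted_sum_rotate: "rooted_sum q m (a, b, c) = rooted_sum q m (b, c, a)"
proof -
  let ?S = "{A. A \<subseteq> sigma_edges m \<and> rooted m A \<and> corner_type m A = (a, b, c)}"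
  let ?S' = "{A. A \<subseteq> sigma_edges m \<and> rooted m A \<and> corner_type m A = (b, c, a)}"
  have "inj_on (edge_image rot_word) (Pow (sigma_edges m))"
    unfolding edge_image_def
    by (rule inj_on_subset[OF inj_on_image_Pow[OF inj_on_image_Pow[OF inj_rot_word]]])
       (use simple_on_Pow[OF simple_edges] in blast)
  then have inj: "inj_on (edge_image rot_word) ?S" by (rule inj_on_subset) auto
  have image: "?S' = edge_image rot_word ` ?S"
  proof (intro equalityI subsetI)
    fix A' assume A': "A' \<in> ?S'"
    then have "A' \<subseteq> edge_image rot_word (sigma_edges m)" using rot_word_edges by simp
    then obtain A where A: "A \<subseteq> sigma_edges m" "A' = edge_image rot_word A"
      unfolding edge_image_def by (auto simp: subset_image_iff)
    obtain x y z where c: "corner_type m A = (x, y, z)" by (cases "corner_type m A") auto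
    then have "corner_type m A = (a, b, c)" using corner_type_rotate[OF A(1) c] A' A(2) by simp
    then show "A' \<in> edge_image rot_word ` ?S"
      using A A' rot_word_invariants(4)[OF A(1)] by blast
  next
    fix A' assume "A' \<in> edge_image rot_word ` ?S"
    then show "A' \<in> ?S'" using rot_word_invariants corner_type_rotate by auto
  qed
  show ?thesis
    unfolding rooted_sum_def image sum.reindex[OF inj] by (rule sum.cong) (auto simp: rot_word_invariants)
qed

lemma rooted_sum_type_value:
  "t \<in> ctypes \<Longrightarrow> rooted_sum q m t = type_value (rooted_sum q m (True, True, True))
     (rooted_sum q m (False, False, True)) (rooted_sum q m (False, False, False)) t"
  unfolding ctypes_def type_value_def
  using rooted_sum_rotate[of q m False False True] rooted_sum_rotate[of q m True False False] by auto

lemma rooted_sum_Suc: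
  fixes q :: real and m :: nat
  defines "H \<equiv> rooted_sum q m (True, True, True)" and "N \<equiv> rooted_sum q m (False, False, True)"
    and "M \<equiv> rooted_sum q m (False, False, False)"
  shows "rooted_sum q (Suc m) (True, True, True) = q * H^3 + 3 * H^3 + 6 * H^2 * N"
    and "rooted_sum q (Suc m) (False, False, True)
           = q * H^2 * N + H^3 + 7 * H^2 * N + H^2 * M + 7 * H * N^2"
    and "rooted_sum q (Suc m) (False, False, False)
           = 3 * q * H * N^2 + H^3 + 12 * H^2 * N + 3 * H^2 * M + 36 * H * N^2
             + 12 * H * N * M + 14 * N^3"
proof -
  have "rooted_sum q (Suc m) tX = (\<Sum>t0\<in>ctypes. type_value H N M t0 * (\<Sum>t1\<in>ctypes.
      type_value H N M t1 * (\<Sum>t2\<in>ctypes. type_value H N M t2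
      * sum_choices (glue_weight q tX t0 t1 t2))))" for tX
    unfolding rooted_sum_recursion sum_UNIV_ctype
    by (intro sum.cong refl arg_cong2[where f = "(*)"])
      (simp_all add: rooted_sum_type_value H_def N_def M_def)
  then have table: "rooted_sum q (Suc m) tX = (\<Sum>t0\<in>ctypes. \<Sum>t1\<in>ctypes. \<Sum>t2\<in>ctypes.
      type_value H N M t0 * type_value H N M t1 * type_value H N M t2
      * sum_choices (glue_weight q tX t0 t1 t2))" for tX
    by (simp add: sum_distrib_left mult.assoc)
  show "rooted_sum q (Suc m) (True, True, True) = q * H^3 + 3 * H^3 + 6 * H^2 * N"
    unfolding table by (rule table_H2)
  show "rooted_sum q (Suc m) (False, False, True)
      = q * H^2 * N + H^3 + 7 * H^2 * N + H^2 * M + 7 * H * N^2"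
    unfolding table by (rule table_N)
  show "rooted_sum q (Suc m) (False, False, False)
      = 3 * q * H * N^2 + H^3 + 12 * H^2 * N + 3 * H^2 * M + 36 * H * N^2
        + 12 * H * N * M + 14 * N^3"
    unfolding table by (rule table_M)
qed

lemma corner_type_0: "corner_type 0 {} = (True,True,True)"
  unfolding corner_type_def verts_0 by (simp add: same_comp_refl)

lemma ncomp_sigma_0: "ncomp (sigma_verts 0) A = 1"
proof -
  have "ncomp (sigma_verts 0) A \<le> card (sigma_verts 0)" by (rule ncomp_le_card[OF finite_verts])
  then have "ncomp (sigma_verts 0) A \<le> 1" by (simp add: verts_0)
  moreover have "ncomp (sigma_verts 0) A \<ge> 1" by (rule ncomp_ge1) (simp_all add: verts_0)
  ultimately show ?thesis by simp
qed

text \<open>Sigma_0 is a single vertex; its only subgraph is rooted of type all-connected.\<close>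
lemma rooted_sum_0: "rooted_sum q 0 t = (if t = (True,True,True) then 1 else 0)"
proof -
  have "{A. A \<subseteq> sigma_edges 0 \<and> rooted 0 A \<and> corner_type 0 A = t}
      = (if t = (True,True,True) then {{}} else {})"
    by (auto simp: rooted_def corner_type_0 ncomp_sigma_0 nclasses_def)
  moreover have "nul 0 {} = 0" unfolding nul_def ncomp_sigma_0 by (simp add: verts_0)
  ultimately show ?thesis unfolding rooted_sum_def by simp
qed

lemma glue_all:
  "glue m (sigma_edges m) (sigma_edges m) (sigma_edges m) (True, True, True) = sigma_edges (Suc m)"
  unfolding glue_def opt_insert_def copies_def edges_Suc bridges_def by auto

text \<open>Sigma_m is connected: gluing connected copies by all bridges stays connected.\<close>
lemma sigma_connected: "ncomp (sigma_verts m) (sigma_edges m) = 1"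
proof (induction m)
  case 0 then show ?case by (rule ncomp_sigma_0)
next
  case (Suc m)
  have "corner_type m (sigma_edges m) = (True,True,True)"
    unfolding corner_type_def using connected_same_comp[OF finite_verts Suc] replicate_in_verts
    by auto
  then show ?case
    using glue_models(2)[OF subset_refl subset_refl subset_refl, of m "(True, True, True)"] Suc
    unfolding glue_all
    by (simp add: merges_def copies_model_def add_edge_model_def corner_rel_def)
qed

lemma card_edges: "2 * card (sigma_edges m) + 3 = 3 ^ Suc m"
proof (induction m)
  case 0 then show ?case by simp
next
  case (Suc m)
  have "card (sigma_edges (Suc m)) = 3 * card (sigma_edges m) + 3"
    using card_glue[OF subset_refl subset_refl subset_refl, of m "(True, True, True)"]
    unfolding glue_all
    by (simp add: nbridges_def)
  then show ?case using Suc by simp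
qed

section \<open>Evaluation at x = 1\<close>

text \<open>At x = 1 the factor (x - 1) ^ (k(A) - 1 - d) vanishes unless A has exactly
d + 1 components; the exponent of y - 1 is then the nullity.\<close>
lemma tutte_part_at_1:
  "tutte_part (sigma_verts m) (sigma_edges m) P d 1 y =
   (\<Sum>A\<in>{A. A \<subseteq> sigma_edges m \<and> P A \<and> ncomp (sigma_verts m) A \<le> d + 1}. (y - 1) ^ nul m A)"
proof -
  let ?V = "sigma_verts m" and ?E = "sigma_edges m"
  let ?S = "{A. A \<subseteq> ?E \<and> P A}"
  have fS: "finite ?S" by (rule finite_subset[of _ "Pow (sigma_edges m)"]) (auto simp: finite_edges)
  have ne: "?V \<noteq> {}" by (rule verts_ne)
  have pw: "(1 - 1) ^ (grank ?V ?E - grank ?V A - d) * (y - 1) ^ nullity ?V A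
       = (if ncomp ?V A \<le> d + 1 then (y - 1) ^ nul m A else 0)" if A: "A \<in> ?S" for A
  proof -
    have k1: "ncomp ?V A \<ge> 1" by (rule ncomp_ge1[OF finite_verts ne])
    have kv: "ncomp ?V A \<le> card ?V" by (rule ncomp_le_card[OF finite_verts])
    have fo: "card ?V \<le> card A + ncomp ?V A" using forest_bound_sigma A by blast
    have g: "grank ?V ?E - grank ?V A - d = ncomp ?V A - 1 - d"
      unfolding grank_def sigma_connected using k1 kv by simp
    have n: "nullity ?V A = nul m A" unfolding nullity_def grank_def nul_def using fo kv by simp
    show ?thesis unfolding g n by auto
  qed
  have "tutte_part ?V ?E P d 1 y = (\<Sum>A\<in>?S. if ncomp ?V A \<le> d + 1 then (y - 1) ^ nul m A else 0)"
    unfolding tutte_part_def by (rule sum.cong) (use pw in auto)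
  also have "\<dots> = (\<Sum>A\<in>{A \<in> ?S. ncomp ?V A \<le> d + 1}. (y - 1) ^ nul m A)"
    by (rule sum.inter_filter[OF fS, symmetric])
  finally show ?thesis by (simp add: conj_assoc)
qed

lemma corner_facts:
  shows "nclasses (corner_type m A) \<le> ncomp (sigma_verts m) A"
    and "corner_type m A \<in> ctypes" and "ncomp (sigma_verts m) A \<ge> 1"
  by (rule nclasses_le_ncomp corner_type_in_ctypes ncomp_ge1[OF finite_verts verts_ne])+

lemma H2_eq_rooted_sum: "H2 m 1 y = rooted_sum (y - 1) m (True,True,True)"
proof -
  have eqv: "((same_comp (sigma_verts m) A (top_v m) (left_v m)
        \<and> same_comp (sigma_verts m) A (top_v m) (right_v m))
      \<and> ncomp (sigma_verts m) A \<le> 0 + 1)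
          = (rooted m A \<and> corner_type m A = (True,True,True))" for A
    using corner_facts[of m A] unfolding rooted_def top_v_def left_v_def right_v_def
    by (auto simp: corner_type_def ctypes_def nclasses_def)
  show ?thesis unfolding H2_def tutte_part_at_1 rooted_sum_def
    by (rule sum.cong[OF Collect_cong refl]) (use eqv in blast)
qed

lemma Hn_eq_rooted_sum: "Hn m 1 y = rooted_sum (y - 1) m (True,True,True)"
proof -
  have eqv: "(True \<and> ncomp (sigma_verts m) A \<le> 0 + 1)
      = (rooted m A \<and> corner_type m A = (True,True,True))"
    for A
  proof -
    have "ncomp (sigma_verts m) A = 1 \<Longrightarrow> corner_type m A = (True,True,True)"
      unfolding corner_type_def using connected_same_comp[OF finite_verts] replicate_in_verts by auto
    then show ?thesis using corner_facts[of m A] unfolding rooted_def by (auto simp: nclasses_def)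
  qed
  show ?thesis unfolding Hn_def tutte_def tutte_part_at_1 rooted_sum_def
    by (rule sum.cong[OF Collect_cong refl]) (use eqv in blast)
qed

lemma Nn_eq_rooted_sum: "Nn m 1 y = rooted_sum (y - 1) m (False,False,True)"
proof -
  have eqv: "((same_comp (sigma_verts m) A (left_v m) (right_v m)
        \<and> \<not> same_comp (sigma_verts m) A (top_v m) (left_v m))
      \<and> ncomp (sigma_verts m) A \<le> 1 + 1)
          = (rooted m A \<and> corner_type m A = (False,False,True))" for A
    using corner_facts[of m A] unfolding rooted_def top_v_def left_v_def right_v_def
    by (auto simp: corner_type_def ctypes_def nclasses_def)
  show ?thesis unfolding Nn_def tutte_part_at_1 rooted_sum_def
    by (rule sum.cong[OF Collect_cong refl]) (use eqv in blast)
qed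

lemma Mn_eq_rooted_sum: "Mn m 1 y = rooted_sum (y - 1) m (False,False,False)"
proof -
  have eqv: "((\<not> same_comp (sigma_verts m) A (top_v m) (left_v m) \<and>
          \<not> same_comp (sigma_verts m) A (top_v m) (right_v m) \<and>
          \<not> same_comp (sigma_verts m) A (left_v m) (right_v m)) \<and> ncomp (sigma_verts m) A \<le> 2 + 1)
       = (rooted m A \<and> corner_type m A = (False,False,False))" for A
    using corner_facts[of m A] unfolding rooted_def top_v_def left_v_def right_v_def
    by (auto simp: corner_type_def ctypes_def nclasses_def)
  show ?thesis unfolding Mn_def tutte_part_at_1 rooted_sum_def
    by (rule sum.cong[OF Collect_cong refl]) (use eqv in blast)
qed

lemma power_split:
  "(1 - p) \<noteq> (0::real) \<Longrightarrow> p ^ i * (1 - p) ^ (j + k) * (p / (1 - p)) ^ k = p ^ (i + k) * (1 - p) ^ j"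
  by (simp add: power_add power_divide)

text \<open>Reliability: a connected spanning subgraph with |A| edges has nullity
|A| - (|V| - 1), which turns the reliability polynomial into the Tutte polynomial
at (1, 1 / (1 - p)).\<close>
lemma reliability_tutte:
  fixes p :: real
  assumes p: "p \<noteq> 1"
  shows "reliability (sigma_verts m) (sigma_edges m) p
     = p ^ (card (sigma_verts m) - 1) * (1 - p) ^
         (card (sigma_edges m) - (card (sigma_verts m) - 1))
       * Hn m 1 (1 / (1 - p))"
proof -
  let ?V = "sigma_verts m" and ?E = "sigma_edges m"
  have p1: "1 - p \<noteq> 0" using p by simp
  have q: "1 / (1 - p) - 1 = p / (1 - p)" using p1 by (simp add: field_simps)
  have k1: "ncomp ?V A \<ge> 1" for A by (rule ncomp_ge1[OF finite_verts verts_ne])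
  have S: "{A. A \<subseteq> ?E \<and> True \<and> ncomp ?V A \<le> 0 + 1} = {A. A \<subseteq> ?E \<and> ncomp ?V A = 1}"
    using k1 by (auto simp: le_Suc_eq) (metis k1 not_one_le_zero)
  have "Hn m 1 (1 / (1 - p)) = (\<Sum>A\<in>{A. A \<subseteq> ?E \<and> ncomp ?V A = 1}. (p / (1 - p)) ^ nul m A)"
    unfolding Hn_def tutte_def tutte_part_at_1 S q ..
  then have "p ^ (card ?V - 1) * (1 - p) ^ (card ?E - (card ?V - 1)) * Hn m 1 (1 / (1 - p))
     = (\<Sum>A\<in>{A. A \<subseteq> ?E \<and> ncomp ?V A = 1}. p ^ (card ?V - 1) * (1 - p) ^ (card ?E - (card ?V - 1))
         * (p / (1 - p)) ^ nul m A)"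
    by (simp add: sum_distrib_left)
  also have "\<dots> = (\<Sum>A\<in>{A. A \<subseteq> ?E \<and> ncomp ?V A = 1}. p ^ card A * (1 - p) ^ (card ?E - card A))"
  proof (rule sum.cong[OF refl])
    fix A assume A: "A \<in> {A. A \<subseteq> ?E \<and> ncomp ?V A = 1}"
    have fo: "card ?V \<le> card A + 1" using forest_bound_sigma[of A m] A by simp
    have ae: "card A \<le> card ?E" using A finite_edges card_mono by blast
    have v1: "card ?V \<ge> 1" using verts_ne finite_verts by (simp add: Suc_leI card_gt_0_iff)
    have n: "nul m A = card A - (card ?V - 1)" unfolding nul_def using A fo v1 by simp
    have e1: "card ?E - (card ?V - 1) = (card ?E - card A) + nul m A" using fo ae n by simp
    have e2: "card A = (card ?V - 1) + nul m A" using fo n by simp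
    show "p ^ (card ?V - 1) * (1 - p) ^ (card ?E - (card ?V - 1)) * (p / (1 - p)) ^ nul m A
        = p ^ card A * (1 - p) ^ (card ?E - card A)"
      unfolding e1 using power_split[OF p1, of "card ?V - 1" "card ?E - card A" "nul m A"] e2
          by simp
  qed
  finally show ?thesis unfolding reliability_def by simp
qed

text \<open>The reliability of Sigma_n: |V| = 3^n and 2|E| = 3^(n+1) - 3.\<close>
lemma reliability_sigma:
  fixes p :: real
  assumes "p \<noteq> 1"
  shows "reliability (sigma_verts n) (sigma_edges n) p
    = p ^ (3 ^ n - 1) * (1 - p) ^ ((3 ^ n - 1) div 2) * Hn n 1 (1 / (1 - p))"
proof -
  have "2 * (card (sigma_edges n) - (3 ^ n - 1)) = 3 ^ n - 1"
    using card_edges[of n] by simp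
  then have "card (sigma_edges n) - (3 ^ n - 1) = (3 ^ n - 1) div 2" by simp
  then show ?thesis using reliability_tutte[OF assms, of n] unfolding card_verts by simp
qed

lemma sigma_recursions:
  fixes y :: real and m :: nat
  defines "q \<equiv> y - 1" and "H \<equiv> H2 m 1 y" and "N \<equiv> Nn m 1 y" and "M \<equiv> Mn m 1 y"
  shows "H2 (Suc m) 1 y = q * H^3 + 3 * H^3 + 6 * H^2 * N"
    and "Nn (Suc m) 1 y = q * H^2 * N + H^3 + 7 * H^2 * N + H^2 * M + 7 * H * N^2"
    and "Mn (Suc m) 1 y = 3 * q * H * N^2 + H^3 + 12 * H^2 * N + 3 * H^2 * M + 36 * H * N^2
                          + 12 * H * N * M + 14 * N^3"
  unfolding q_def H_def N_def M_def H2_eq_rooted_sum Nn_eq_rooted_sum Mn_eq_rooted_sum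
      by (rule rooted_sum_Suc)+

lemma sigma_initial:
  fixes y :: real
  shows "H2 1 1 y = y + 2" and "Nn 1 1 y = 1" and "Mn 1 1 y = 1"
  using rooted_sum_Suc[of "y - 1" 0]
  unfolding H2_eq_rooted_sum Nn_eq_rooted_sum Mn_eq_rooted_sum rooted_sum_0 One_nat_def by simp_all

theorem proposition4p6:
  fixes n :: nat and p :: real
  assumes "n \<ge> 1" and "0 \<le> p" and "p < 1"
  defines "y \<equiv> 1 / (1 - p)"
  shows "reliability (sigma_verts n) (sigma_edges n) p
           = p ^ (3 ^ n - 1) * (1 - p) ^ ((3 ^ n - 1) div 2) * Hn n 1 y
    \<and> Hn n 1 y = H2 n 1 y
    \<and> H2 (n + 1) 1 y = p / (1 - p) * H2 n 1 y ^ 3 + 3 * H2 n 1 y ^ 3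
                       + 6 * H2 n 1 y ^ 2 * Nn n 1 y
    \<and> Nn (n + 1) 1 y = p / (1 - p) * H2 n 1 y ^ 2 * Nn n 1 y + H2 n 1 y ^ 3
                       + 7 * H2 n 1 y ^ 2 * Nn n 1 y + H2 n 1 y ^ 2 * Mn n 1 y
                       + 7 * H2 n 1 y * Nn n 1 y ^ 2
    \<and> Mn (n + 1) 1 y = 3 * p / (1 - p) * H2 n 1 y * Nn n 1 y ^ 2 + H2 n 1 y ^ 3
                       + 12 * H2 n 1 y ^ 2 * Nn n 1 y + 3 * H2 n 1 y ^ 2 * Mn n 1 y
                       + 36 * H2 n 1 y * Nn n 1 y ^ 2 + 12 * H2 n 1 y * Nn n 1 y * Mn n 1 y
                       + 14 * Nn n 1 y ^ 3
    \<and> H2 1 1 y = (3 - 2 * p) / (1 - p)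
    \<and> Nn 1 1 y = 1
    \<and> Mn 1 1 y = 1"
proof -
  have p1: "1 - p \<noteq> 0" using assms by simp
  have q: "y - 1 = p / (1 - p)" unfolding y_def using p1 by (simp add: field_simps)
  have H1: "y + 2 = (3 - 2 * p) / (1 - p)" unfolding y_def using p1 by (simp add: field_simps)
  have "Hn n 1 y = H2 n 1 y" unfolding Hn_eq_rooted_sum H2_eq_rooted_sum ..
  then show ?thesis
    using reliability_sigma[of p n] sigma_recursions[of n y] sigma_initial[of y] assms(3)
    unfolding q H1 y_def[symmetric] Suc_eq_plus1 by (simp add: mult.assoc)
qed

end
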